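(* Let $P_{XZ}$ be a joint distribution on a finite alphabet $\mathsf{X}\times\mathsf{Z}$, let $\mathsf{Y}$ be a finite reconstruction alphabet, and let $W_{X|YZ}$ be a conditional distribution of $X$ given $(Y,Z)$ (the posterior channel). Suppose there exist a finite alphabet $\mathsf{U}$ and conditional PMFs $P_{U|X}$ and $P_{Y|UZ}$ such that the joint distribution $$P_{UXYZ}(u,x,y,z):=P_{XZ}(x,z)P_{U|X}(u|x)P_{Y|UZ}(y|u,z)$$ satisfies: its induced conditional $P_{X|YZ}(x|y,z)=W_{X|YZ}(x|y,z)$ for all $(x,y,z)$ with $P_{YZ}(y,z)>0$; $Z-X-U$, $X-(U,Z)-Y$ and $X-(Y,Z)-U$ are Markov chains under $P_{UXYZ}$; and $R\ge I(X;U)-I(U;Z)$, where the mutual informations are computed under $P_{UXYZ}$. Then $R$ is an achievable rate (in the sense defined in the context) for $(P_{XZ},\mathsf{Y},W_{X|YZ})$.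
   Context: An $(n,\Theta)$ lossy source compression protocol with classical side information consists of a randomized encoder $\mathcal{E}^{(n)}(m|x^n)$, a conditional PMF on $[\Theta]=\{1,\dots,\Theta\}$ given $x^n\in\mathsf{X}^n$, and a randomized decoder $\mathcal{D}^{(n)}(y^n|m,z^n)$, a conditional PMF on $\mathsf{Y}^n$ given $(m,z^n)\in[\Theta]\times\mathsf{Z}^n$. It induces $$P_{X^nY^nZ^n}(x^n,y^n,z^n)=P_{XZ}^n(x^n,z^n)\sum_{m\in[\Theta]}\mathcal{E}^{(n)}(m|x^n)\mathcal{D}^{(n)}(y^n|m,z^n),$$ where $P_{XZ}^n$ is the $n$-fold i.i.d. product. With $P_{Y^nZ^n}$ its marginal and $W^n_{X|YZ}(x^n|y^n,z^n)=\prod_{i=1}^nW_{X|YZ}(x_i|y_i,z_i)$, the error is $\Xi:=\|P_{X^nY^nZ^n}-P_{Y^nZ^n}W^n_{X|YZ}\|_{\mathrm{TV}}$ (total variation distance). A rate $R$ is achievable if for every $\epsilon>0$ and all sufficiently large $n$ there exists an $(n,\Theta)$ protocol with $\frac1n\log\Theta\le R+\epsilon$ and $\Xi\le\epsilon$. *)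

theory Defs
  imports Complex_Main
begin

definition is_pmf :: "('a::finite \<Rightarrow> real) \<Rightarrow> bool" where
  "is_pmf p \<longleftrightarrow> (\<forall>a. p a \<ge> 0) \<and> (\<Sum>a\<in>UNIV. p a) = 1"

definition seqs :: "nat \<Rightarrow> 'a list set" where
  "seqs n = {xs. length xs = n}"

definition mutual_info :: "('a::finite \<Rightarrow> 'b::finite \<Rightarrow> real) \<Rightarrow> real" where
  "mutual_info p = (\<Sum>a\<in>UNIV. \<Sum>b\<in>UNIV.
      if p a b = 0 then 0
      else p a b * log 2 (p a b / ((\<Sum>b'\<in>UNIV. p a b') * (\<Sum>a'\<in>UNIV. p a' b))))"

text \<open>A - B - C is a Markov chain under the joint PMF p:
  P(a,b,c) P(b) = P(a,b) P(b,c).\<close>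
definition markov_chain :: "('a::finite \<Rightarrow> 'b::finite \<Rightarrow> 'c::finite \<Rightarrow> real) \<Rightarrow> bool" where
  "markov_chain p \<longleftrightarrow> (\<forall>a b c.
      p a b c * (\<Sum>a'\<in>UNIV. \<Sum>c'\<in>UNIV. p a' b c') =
      (\<Sum>c'\<in>UNIV. p a b c') * (\<Sum>a'\<in>UNIV. p a' b c))"

text \<open>An (n,Theta) protocol: randomized encoder E xs m (a PMF on {1..Theta} for each
length-n source sequence xs), randomized decoder D m zs ys (a PMF on length-n
reconstruction sequences for each message m and side information zs).\<close>
definition is_protocol :: "nat \<Rightarrow> nat \<Rightarrow> ('x list \<Rightarrow> nat \<Rightarrow> real)
    \<Rightarrow> (nat \<Rightarrow> 'z list \<Rightarrow> 'y list \<Rightarrow> real) \<Rightarrow> bool" where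
  "is_protocol n \<Theta> E D \<longleftrightarrow> \<Theta> \<ge> 1 \<and>
     (\<forall>xs\<in>seqs n. (\<forall>m\<in>{1..\<Theta>}. E xs m \<ge> 0) \<and> (\<Sum>m\<in>{1..\<Theta>}. E xs m) = 1) \<and>
     (\<forall>m\<in>{1..\<Theta>}. \<forall>zs\<in>seqs n. (\<forall>ys\<in>seqs n. D m zs ys \<ge> 0) \<and> (\<Sum>ys\<in>seqs n. D m zs ys) = 1)"

definition induced_joint :: "('x \<Rightarrow> 'z \<Rightarrow> real) \<Rightarrow> nat \<Rightarrow> nat \<Rightarrow> ('x list \<Rightarrow> nat \<Rightarrow> real)
    \<Rightarrow> (nat \<Rightarrow> 'z list \<Rightarrow> 'y list \<Rightarrow> real) \<Rightarrow> 'x list \<Rightarrow> 'y list \<Rightarrow> 'z list \<Rightarrow> real" where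
  "induced_joint PXZ n \<Theta> E D xs ys zs =
     (\<Prod>i<n. PXZ (xs ! i) (zs ! i)) * (\<Sum>m\<in>{1..\<Theta>}. E xs m * D m zs ys)"

text \<open>The error Xi: total variation distance (half the L1 distance) between the
induced joint distribution and P_{Y^n Z^n} W^n_{X|YZ}.\<close>
definition protocol_error :: "('x::finite \<Rightarrow> 'z::finite \<Rightarrow> real) \<Rightarrow> ('y::finite \<Rightarrow> 'z \<Rightarrow> 'x \<Rightarrow> real)
    \<Rightarrow> nat \<Rightarrow> nat \<Rightarrow> ('x list \<Rightarrow> nat \<Rightarrow> real) \<Rightarrow> (nat \<Rightarrow> 'z list \<Rightarrow> 'y list \<Rightarrow> real) \<Rightarrow> real" where
  "protocol_error PXZ W n \<Theta> E D =
     (let P = induced_joint PXZ n \<Theta> E D;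
          PYZ = (\<lambda>ys zs. \<Sum>xs\<in>seqs n. P xs ys zs)
      in (1/2) * (\<Sum>xs\<in>seqs n. \<Sum>ys\<in>seqs n. \<Sum>zs\<in>seqs n.
            \<bar>P xs ys zs - PYZ ys zs * (\<Prod>i<n. W (ys ! i) (zs ! i) (xs ! i))\<bar>))"

text \<open>Achievability of rate R for (P_XZ, Y, W_{X|YZ}); Y is the type 'y.\<close>
definition achievable :: "('x::finite \<Rightarrow> 'z::finite \<Rightarrow> real) \<Rightarrow> ('y::finite \<Rightarrow> 'z \<Rightarrow> 'x \<Rightarrow> real)
    \<Rightarrow> real \<Rightarrow> bool" where
  "achievable PXZ W R \<longleftrightarrow> (\<forall>\<epsilon>>0. \<exists>N. \<forall>n\<ge>N. \<exists>\<Theta> E D.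
      is_protocol n \<Theta> E D \<and> log 2 (real \<Theta>) / real n \<le> R + \<epsilon> \<and>
      protocol_error PXZ W n \<Theta> E D \<le> \<epsilon>)"

end

theory Submission
  imports Defs
begin

text \<open>Random binning with a likelihood encoder. Draw \<open>2 ^ (n (R + 8 \<delta>))\<close> bins of
  \<open>2 ^ (n (I(U;Z) - 2 \<delta>))\<close> i.i.d. \<open>P\<^sub>U\<^sup>n\<close> codewords each. The encoder picks a codeword with
  probability proportional to \<open>P\<^sub>X\<^sub>|\<^sub>U\<^sup>n(x\<^sup>n | u\<^sup>n)\<close> and sends its bin; the decoder picks a
  codeword of that bin proportionally to \<open>P\<^sub>Z\<^sub>|\<^sub>U\<^sup>n(z\<^sup>n | u\<^sup>n)\<close> and outputs
  \<open>Y\<^sup>n \<sim> P\<^sub>Y\<^sub>|\<^sub>U\<^sub>Z\<^sup>n\<close>. Were the decoder always to recover the encoder's codeword,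
  \<open>(X\<^sup>n, Y\<^sup>n, Z\<^sup>n)\<close> would follow an ideal law whose posterior of \<open>X\<^sup>n\<close> is exactly \<open>W\<^sup>n\<close>,
  because of \<open>X - (Y, Z) - U\<close>. The total variation to this ideal law splits into a soft
  covering term (the codebook's output distribution approximates \<open>P\<^sub>X\<^sup>n\<close> since the codebook
  rate exceeds \<open>I(U;X)\<close>) and a decoding term (a competitor in the bin rarely wins since the bin
  rate is below \<open>I(U;Z)\<close>). Averaged over the random codebook, both are controlled by Chernoff
  bounds on the information densities and decay exponentially; data processing,
  \<open>I(U;Z) \<le> I(U;X)\<close>, keeps the message rate positive.\<close>

section \<open>Sums over sequences and i.i.d. products\<close>

definition lists_length :: "'a set \<Rightarrow> nat \<Rightarrow> 'a list set" where
  "lists_length A n = {xs. set xs \<subseteq> A \<and> length xs = n}"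

lemma seqs_eq_lists_length: "seqs n = lists_length UNIV n"
  by (simp add: seqs_def lists_length_def)

lemma finite_lists_length: "finite A \<Longrightarrow> finite (lists_length A n)"
  unfolding lists_length_def by (rule finite_lists_length_eq)

lemma finite_seqs [simp]: "finite (seqs n :: 'a::finite list set)"
  by (simp add: seqs_eq_lists_length finite_lists_length)

lemma lists_length_Suc: "lists_length A (Suc n) = (\<lambda>(xs, a). xs @ [a]) ` (lists_length A n \<times> A)"
proof (rule set_eqI)
  fix xs :: "'a list"
  show "xs \<in> lists_length A (Suc n) \<longleftrightarrow> xs \<in> (\<lambda>(ys, a). ys @ [a]) ` (lists_length A n \<times> A)"
  proof
    assume xs: "xs \<in> lists_length A (Suc n)"
    then obtain ys a where "xs = ys @ [a]"
      by (cases xs rule: rev_cases) (auto simp: lists_length_def)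
    with xs show "xs \<in> (\<lambda>(ys, a). ys @ [a]) ` (lists_length A n \<times> A)"
      by (auto simp: lists_length_def image_iff)
  qed (auto simp: lists_length_def)
qed

lemma sum_lists_length_prod:
  fixes f :: "nat \<Rightarrow> 'a \<Rightarrow> 'b::comm_semiring_1"
  assumes "finite A"
  shows "(\<Sum>xs\<in>lists_length A n. \<Prod>i<n. f i (xs ! i)) = (\<Prod>i<n. \<Sum>a\<in>A. f i a)"
proof (induction n)
  case 0
  have "lists_length A 0 = {[]}" by (auto simp: lists_length_def)
  then show ?case by simp
next
  case (Suc n)
  have inj: "inj_on (\<lambda>(xs, a). xs @ [a]) (lists_length A n \<times> A)"
    by (auto simp: inj_on_def)
  have snoc: "(\<Prod>i<Suc n. f i ((xs @ [a]) ! i)) = (\<Prod>i<n. f i (xs ! i)) * f n a"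
    if "xs \<in> lists_length A n" for xs a
    using that by (auto simp: lists_length_def nth_append intro!: prod.cong)
  have "(\<Sum>xs\<in>lists_length A (Suc n). \<Prod>i<Suc n. f i (xs ! i))
      = (\<Sum>(xs, a)\<in>lists_length A n \<times> A. (\<Prod>i<n. f i (xs ! i)) * f n a)"
    unfolding lists_length_Suc sum.reindex[OF inj]
    by (intro sum.cong refl) (auto simp: snoc simp del: prod.lessThan_Suc)
  also have "\<dots> = (\<Sum>xs\<in>lists_length A n. \<Sum>a\<in>A. (\<Prod>i<n. f i (xs ! i)) * f n a)"
    by (rule sum.cartesian_product[symmetric])
  also have "\<dots> = (\<Prod>i<Suc n. \<Sum>a\<in>A. f i a)"
    by (simp add: Suc sum_product[symmetric])
  finally show ?case .
qed

lemma sum_seqs_prod: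
  "(\<Sum>xs\<in>seqs n. \<Prod>i<n. f i (xs ! i)) = (\<Prod>i<n. \<Sum>a\<in>(UNIV::'a::finite set). (f i a :: 'b::comm_semiring_1))"
  unfolding seqs_eq_lists_length by (rule sum_lists_length_prod) simp

definition iid :: "nat \<Rightarrow> ('a \<Rightarrow> real) \<Rightarrow> 'a list \<Rightarrow> real" where
  "iid n p xs = (\<Prod>i<n. p (xs ! i))"

definition iid2 :: "nat \<Rightarrow> ('a \<Rightarrow> 'b \<Rightarrow> real) \<Rightarrow> 'a list \<Rightarrow> 'b list \<Rightarrow> real" where
  "iid2 n p xs ys = (\<Prod>i<n. p (xs ! i) (ys ! i))"

definition iid3 :: "nat \<Rightarrow> ('a \<Rightarrow> 'b \<Rightarrow> 'c \<Rightarrow> real) \<Rightarrow> 'a list \<Rightarrow> 'b list \<Rightarrow> 'c list \<Rightarrow> real" where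
  "iid3 n p xs ys zs = (\<Prod>i<n. p (xs ! i) (ys ! i) (zs ! i))"

lemma iid_nonneg: "(\<And>a. p a \<ge> 0) \<Longrightarrow> iid n p xs \<ge> 0"
  by (simp add: iid_def prod_nonneg)

lemma iid2_nonneg: "(\<And>a b. p a b \<ge> 0) \<Longrightarrow> iid2 n p xs ys \<ge> 0"
  by (simp add: iid2_def prod_nonneg)

lemma iid3_nonneg: "(\<And>a b c. p a b c \<ge> 0) \<Longrightarrow> iid3 n p xs ys zs \<ge> 0"
  by (simp add: iid3_def prod_nonneg)

lemma iid_le_1: "(\<And>a. p a \<ge> 0) \<Longrightarrow> (\<And>a. p a \<le> 1) \<Longrightarrow> iid n p xs \<le> 1"
  unfolding iid_def by (rule prod_le_1) auto

lemma sum_iid: "(\<Sum>xs\<in>seqs n. iid n p xs) = (\<Sum>a\<in>(UNIV::'a::finite set). p a) ^ n"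
  using sum_seqs_prod[where f="\<lambda>i. p"] by (simp add: iid_def)

lemma sum_iid2_right:
  "(\<Sum>ys\<in>seqs n. iid2 n p xs ys) = iid n (\<lambda>a. \<Sum>b\<in>(UNIV::'b::finite set). p a b) xs"
  unfolding iid_def iid2_def by (rule sum_seqs_prod)

lemma sum_iid3_right:
  "(\<Sum>zs\<in>seqs n. iid3 n p xs ys zs) = iid2 n (\<lambda>a b. \<Sum>c\<in>(UNIV::'c::finite set). p a b c) xs ys"
  unfolding iid2_def iid3_def by (rule sum_seqs_prod)

lemma sum_sum_iid2:
  "(\<Sum>xs\<in>seqs n. \<Sum>ys\<in>seqs n. iid2 n p xs ys) =
   (\<Sum>a\<in>(UNIV::'a::finite set). \<Sum>b\<in>(UNIV::'b::finite set). p a b) ^ n"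
  by (simp add: sum_iid2_right sum_iid)

lemma iid_mult_iid2: "iid n p xs * iid2 n q xs ys = iid2 n (\<lambda>a b. p a * q a b) xs ys"
  by (simp add: iid_def iid2_def prod.distrib)

lemma sum_iid_mult_iid2:
  "(\<Sum>xs\<in>seqs n. iid n p xs * iid2 n q xs ys) =
   iid n (\<lambda>b. \<Sum>a\<in>(UNIV::'a::finite set). p a * q a b) ys"
  unfolding iid_mult_iid2 unfolding iid_def iid2_def by (rule sum_seqs_prod)

lemma sum_iid2_mult_iid2:
  "(\<Sum>ys\<in>seqs n. iid2 n p xs ys * iid2 n q ys zs) =
   iid2 n (\<lambda>a c. \<Sum>b\<in>(UNIV::'b::finite set). p a b * q b c) xs zs"
  unfolding iid2_def prod.distrib[symmetric] by (rule sum_seqs_prod)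

lemma iid2_eq_0: "i < n \<Longrightarrow> p (xs ! i) (ys ! i) = 0 \<Longrightarrow> iid2 n p xs ys = 0"
  unfolding iid2_def by (rule prod_zero) auto

lemma sum_rotate3:
  "(\<Sum>x\<in>A. \<Sum>y\<in>B. \<Sum>z\<in>C. f x y z) = (\<Sum>y\<in>B. \<Sum>z\<in>C. \<Sum>x\<in>A. f x y z)"
proof -
  have "(\<Sum>x\<in>A. \<Sum>y\<in>B. \<Sum>z\<in>C. f x y z) = (\<Sum>y\<in>B. \<Sum>x\<in>A. \<Sum>z\<in>C. f x y z)"
    by (rule sum.swap)
  also have "\<dots> = (\<Sum>y\<in>B. \<Sum>z\<in>C. \<Sum>x\<in>A. f x y z)"
    by (intro sum.cong refl) (rule sum.swap)
  finally show ?thesis .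
qed

lemma sum_sum_sum_sum_swap:
  "(\<Sum>x\<in>A. \<Sum>y\<in>B. \<Sum>z\<in>C. \<Sum>k\<in>D. f k x y z) = (\<Sum>k\<in>D. \<Sum>x\<in>A. \<Sum>y\<in>B. \<Sum>z\<in>C. f k x y z)"
proof -
  have "(\<Sum>y\<in>B. \<Sum>z\<in>C. \<Sum>k\<in>D. f k x y z) = (\<Sum>k\<in>D. \<Sum>y\<in>B. \<Sum>z\<in>C. f k x y z)" for x
  proof -
    have "(\<Sum>y\<in>B. \<Sum>z\<in>C. \<Sum>k\<in>D. f k x y z) = (\<Sum>y\<in>B. \<Sum>k\<in>D. \<Sum>z\<in>C. f k x y z)"
      by (intro sum.cong refl) (rule sum.swap)
    also have "\<dots> = (\<Sum>k\<in>D. \<Sum>y\<in>B. \<Sum>z\<in>C. f k x y z)"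
      by (rule sum.swap)
    finally show ?thesis .
  qed
  then have "(\<Sum>x\<in>A. \<Sum>y\<in>B. \<Sum>z\<in>C. \<Sum>k\<in>D. f k x y z) = (\<Sum>x\<in>A. \<Sum>k\<in>D. \<Sum>y\<in>B. \<Sum>z\<in>C. f k x y z)"
    by simp
  also have "\<dots> = (\<Sum>k\<in>D. \<Sum>x\<in>A. \<Sum>y\<in>B. \<Sum>z\<in>C. f k x y z)"
    by (rule sum.swap)
  finally show ?thesis .
qed

lemma exists_le_weighted_sum:
  fixes f :: "'a \<Rightarrow> real"
  assumes "finite C" and "\<And>c. c \<in> C \<Longrightarrow> w c \<ge> 0" and "(\<Sum>c\<in>C. w c) = 1"
  shows "\<exists>c\<in>C. f c \<le> (\<Sum>c\<in>C. w c * f c)"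
proof (rule ccontr)
  let ?E = "\<Sum>c\<in>C. w c * f c"
  assume "\<not> ?thesis"
  then have less: "?E < f c" if "c \<in> C" for c
    using that by force
  obtain c0 where c0: "c0 \<in> C" "w c0 > 0"
    using assms(2,3) by (metis less_eq_real_def sum.neutral zero_neq_one)
  have "?E = (\<Sum>c\<in>C. w c * ?E)"
    by (simp add: sum_distrib_right[symmetric] assms(3))
  also have "\<dots> < ?E"
  proof (rule sum_strict_mono_ex1[OF assms(1)])
    show "\<forall>c\<in>C. w c * ?E \<le> w c * f c"
      using assms(2) less by (auto intro: mult_left_mono less_imp_le)
    show "\<exists>c\<in>C. w c * ?E < w c * f c"
      using c0 less by (auto intro!: bexI[of _ c0])
  qed
  finally show False by simp
qed

lemma sum_abs_diff_posterior_le: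
  fixes P Q :: "'a \<Rightarrow> 'b \<Rightarrow> 'c \<Rightarrow> real" and V :: "'b \<Rightarrow> 'c \<Rightarrow> 'a \<Rightarrow> real"
  assumes V_nonneg: "\<And>b c a. V b c a \<ge> 0" and sum_V: "\<And>b c. (\<Sum>a\<in>A. V b c a) = 1"
    and Q_eq: "\<And>a b c. Q a b c = (\<Sum>a'\<in>A. Q a' b c) * V b c a"
  shows "(\<Sum>a\<in>A. \<Sum>b\<in>B. \<Sum>c\<in>C. \<bar>P a b c - (\<Sum>a'\<in>A. P a' b c) * V b c a\<bar>)
           \<le> 2 * (\<Sum>a\<in>A. \<Sum>b\<in>B. \<Sum>c\<in>C. \<bar>P a b c - Q a b c\<bar>)"
proof -
  let ?D = "\<lambda>b c. \<bar>(\<Sum>a'\<in>A. Q a' b c) - (\<Sum>a'\<in>A. P a' b c)\<bar>"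
  have "\<bar>P a b c - (\<Sum>a'\<in>A. P a' b c) * V b c a\<bar> \<le> \<bar>P a b c - Q a b c\<bar> + ?D b c * V b c a"
    for a b c
  proof -
    have "P a b c - (\<Sum>a'\<in>A. P a' b c) * V b c a =
          (P a b c - Q a b c) + ((\<Sum>a'\<in>A. Q a' b c) - (\<Sum>a'\<in>A. P a' b c)) * V b c a"
      by (subst Q_eq) (simp add: algebra_simps)
    then show ?thesis
      using V_nonneg[of b c a] by (metis abs_mult abs_of_nonneg abs_triangle_ineq)
  qed
  then have "(\<Sum>a\<in>A. \<Sum>b\<in>B. \<Sum>c\<in>C. \<bar>P a b c - (\<Sum>a'\<in>A. P a' b c) * V b c a\<bar>)
      \<le> (\<Sum>a\<in>A. \<Sum>b\<in>B. \<Sum>c\<in>C. \<bar>P a b c - Q a b c\<bar>) + (\<Sum>a\<in>A. \<Sum>b\<in>B. \<Sum>c\<in>C. ?D b c * V b c a)"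
    by (simp add: sum.distrib[symmetric] sum_mono)
  also have "(\<Sum>a\<in>A. \<Sum>b\<in>B. \<Sum>c\<in>C. ?D b c * V b c a) = (\<Sum>b\<in>B. \<Sum>c\<in>C. ?D b c)"
    unfolding sum_rotate3[where A=A] by (simp add: sum_distrib_left[symmetric] sum_V)
  also have "\<dots> \<le> (\<Sum>b\<in>B. \<Sum>c\<in>C. \<Sum>a\<in>A. \<bar>P a b c - Q a b c\<bar>)"
    by (intro sum_mono) (simp add: sum_subtractf[symmetric] abs_minus_commute order.trans[OF sum_abs])
  also have "\<dots> = (\<Sum>a\<in>A. \<Sum>b\<in>B. \<Sum>c\<in>C. \<bar>P a b c - Q a b c\<bar>)"
    by (rule sum_rotate3[symmetric])
  finally show ?thesis by simp
qed

section \<open>Random codebooks\<close>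

locale iid_codebook =
  fixes S :: "'b set" and q :: "'b \<Rightarrow> real" and K :: nat
  assumes finite_S: "finite S" and q_nonneg: "\<And>u. q u \<ge> 0" and sum_q: "(\<Sum>u\<in>S. q u) = 1"
begin

definition expect :: "('b list \<Rightarrow> real) \<Rightarrow> real" where
  "expect f = (\<Sum>c\<in>lists_length S K. (\<Prod>k<K. q (c ! k)) * f c)"

lemma sum_codebook_weights: "(\<Sum>c\<in>lists_length S K. \<Prod>k<K. q (c ! k)) = 1"
  using sum_lists_length_prod[OF finite_S, of "\<lambda>k. q" K] by (simp add: sum_q)

lemma expect_prod: "expect (\<lambda>c. \<Prod>k<K. g k (c ! k)) = (\<Prod>k<K. \<Sum>u\<in>S. q u * g k u)"
  unfolding expect_def prod.distrib[symmetric] by (rule sum_lists_length_prod[OF finite_S])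

lemma expect_const [simp]: "expect (\<lambda>c. a) = a"
  by (simp add: expect_def sum_distrib_right[symmetric] sum_codebook_weights)

lemma expect_add: "expect (\<lambda>c. f c + g c) = expect f + expect g"
  unfolding expect_def by (simp add: distrib_left sum.distrib)

lemma expect_diff: "expect (\<lambda>c. f c - g c) = expect f - expect g"
  unfolding expect_def by (simp add: right_diff_distrib sum_subtractf)

lemma expect_cmult: "expect (\<lambda>c. a * f c) = a * expect f"
  unfolding expect_def by (simp add: sum_distrib_left mult_ac)

lemma expect_sum: "expect (\<lambda>c. \<Sum>i\<in>I. f i c) = (\<Sum>i\<in>I. expect (f i))"
  unfolding expect_def by (simp add: sum_distrib_left sum.swap[of _ I])

lemma expect_mono: "(\<And>c. c \<in> lists_length S K \<Longrightarrow> f c \<le> g c) \<Longrightarrow> expect f \<le> expect g"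
  unfolding expect_def by (intro sum_mono mult_left_mono) (auto simp: prod_nonneg q_nonneg)

lemma expect_nth_mult_nth:
  assumes "i < K" "j < K" "i \<noteq> j"
  shows "expect (\<lambda>c. f (c ! i) * g (c ! j)) = (\<Sum>u\<in>S. q u * f u) * (\<Sum>u\<in>S. q u * g u)"
proof -
  define h where "h k u = (if k = i then f u else 1) * (if k = j then g u else 1)" for k u
  have "(\<Prod>k<K. h k (c ! k)) = f (c ! i) * g (c ! j)" for c
    using assms by (simp add: h_def prod.distrib prod.delta)
  moreover have "(\<Sum>u\<in>S. q u * h k u) =
      (if k = i then \<Sum>u\<in>S. q u * f u else 1) * (if k = j then \<Sum>u\<in>S. q u * g u else 1)" for k
    using assms(3) by (simp add: h_def sum_q)
  ultimately show ?thesis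
    using expect_prod[of h] assms by (simp add: prod.distrib)
qed

lemma expect_nth:
  assumes "i < K"
  shows "expect (\<lambda>c. f (c ! i)) = (\<Sum>u\<in>S. q u * f u)"
proof -
  define h where "h k u = (if k = i then f u else 1)" for k u
  have "(\<Prod>k<K. h k (c ! k)) = f (c ! i)" for c
    using assms by (simp add: h_def prod.delta)
  moreover have "(\<Sum>u\<in>S. q u * h k u) = (if k = i then \<Sum>u\<in>S. q u * f u else 1)" for k
    by (simp add: h_def sum_q)
  ultimately show ?thesis
    using expect_prod[of h] assms by (simp add: prod.delta)
qed

lemma exists_le_expect: "\<exists>c\<in>lists_length S K. f c \<le> expect f"
  unfolding expect_def
  by (intro exists_le_weighted_sum)
     (auto simp: finite_lists_length finite_S prod_nonneg q_nonneg sum_codebook_weights)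

lemma expect_sq_dev_empirical_mean:
  assumes K: "K \<ge> 1"
  shows "expect (\<lambda>c. ((\<Sum>u\<in>S. q u * A u) - (\<Sum>k<K. A (c ! k)) / real K)\<^sup>2)
           \<le> (\<Sum>u\<in>S. q u * (A u)\<^sup>2) / real K"
proof -
  define \<mu> where "\<mu> = (\<Sum>u\<in>S. q u * A u)"
  define V where "V = (\<Sum>u\<in>S. q u * (A u)\<^sup>2)"
  have mean: "expect (\<lambda>c. \<Sum>k<K. A (c ! k)) = real K * \<mu>"
    by (simp add: expect_sum expect_nth \<mu>_def)
  have pair: "expect (\<lambda>c. A (c ! k) * A (c ! k')) = (if k = k' then V else \<mu>\<^sup>2)"
    if "k < K" "k' < K" for k k'
    using that expect_nth[of k "\<lambda>u. A u * A u"] expect_nth_mult_nth[of k k' A A]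
    by (cases "k = k'") (simp_all add: V_def \<mu>_def power2_eq_square)
  have "expect (\<lambda>c. (\<Sum>k<K. A (c ! k))\<^sup>2) = (\<Sum>k<K. \<Sum>k'<K. if k = k' then V else \<mu>\<^sup>2)"
    by (simp add: power2_eq_square sum_product expect_sum pair)
  also have "\<dots> = (\<Sum>k<K. \<Sum>k'<K. \<mu>\<^sup>2 + (if k = k' then V - \<mu>\<^sup>2 else 0))"
    by (intro sum.cong) auto
  also have "\<dots> = real K * (V + (real K - 1) * \<mu>\<^sup>2)"
    by (simp add: sum.distrib algebra_simps)
  finally have second_moment: "expect (\<lambda>c. (\<Sum>k<K. A (c ! k))\<^sup>2) = \<dots>" .
  have "expect (\<lambda>c. (\<mu> - (\<Sum>k<K. A (c ! k)) / real K)\<^sup>2) =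
        expect (\<lambda>c. \<mu>\<^sup>2 - (2 * \<mu> / real K) * (\<Sum>k<K. A (c ! k))
                      + (1 / (real K)\<^sup>2) * (\<Sum>k<K. A (c ! k))\<^sup>2)"
    using K by (intro arg_cong[where f=expect] ext) (simp add: power2_eq_square field_simps)
  also have "\<dots> = \<mu>\<^sup>2 - (2 * \<mu> / real K) * (real K * \<mu>)
                  + (1 / (real K)\<^sup>2) * (real K * (V + (real K - 1) * \<mu>\<^sup>2))"
    by (simp only: expect_add expect_diff expect_cmult expect_const mean second_moment)
  also have "\<dots> = (V - \<mu>\<^sup>2) / real K"
    using K by (simp add: field_simps power2_eq_square)
  also have "\<dots> \<le> V / real K"
    by (simp add: divide_right_mono)
  finally show ?thesis unfolding \<mu>_def V_def .
qed

text \<open>By AM-GM, \<open>\<bar>d\<bar> \<le> d\<^sup>2 / (2 a) + a / 2\<close> for every \<open>a > 0\<close>.\<close>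

lemma expect_abs_dev_empirical_mean:
  assumes K: "K \<ge> 1" and a: "a > 0"
  shows "expect (\<lambda>c. \<bar>(\<Sum>u\<in>S. q u * A u) - (\<Sum>k<K. A (c ! k)) / real K\<bar>)
           \<le> (\<Sum>u\<in>S. q u * (A u)\<^sup>2) / (real K * 2 * a) + a / 2"
proof -
  let ?dev = "\<lambda>c. (\<Sum>u\<in>S. q u * A u) - (\<Sum>k<K. A (c ! k)) / real K"
  have am_gm: "\<bar>d\<bar> \<le> 1 / (2 * a) * d\<^sup>2 + a / 2" for d :: real
  proof -
    have "2 * a * \<bar>d\<bar> \<le> d\<^sup>2 + a\<^sup>2"
      using sum_squares_bound[of "\<bar>d\<bar>" a] by (simp add: power2_eq_square algebra_simps)
    then show ?thesis using a by (simp add: field_simps power2_eq_square)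
  qed
  have "expect (\<lambda>c. \<bar>?dev c\<bar>) \<le> expect (\<lambda>c. 1 / (2 * a) * (?dev c)\<^sup>2 + a / 2)"
    by (intro expect_mono am_gm)
  also have "\<dots> = 1 / (2 * a) * expect (\<lambda>c. (?dev c)\<^sup>2) + a / 2"
    by (simp only: expect_add expect_cmult expect_const)
  also have "\<dots> \<le> 1 / (2 * a) * ((\<Sum>u\<in>S. q u * (A u)\<^sup>2) / real K) + a / 2"
    using expect_sq_dev_empirical_mean[OF K] a by (intro add_right_mono mult_left_mono) auto
  finally show ?thesis by (simp add: field_simps)
qed

lemma expect_abs_dev_empirical_mean_bounded:
  assumes K: "K \<ge> 1" and \<tau>: "\<tau> > 0" and A_nonneg: "\<And>u. A u \<ge> 0"
    and A_le: "\<And>u. A u \<le> \<tau> * m" and mean_le: "(\<Sum>u\<in>S. q u * A u) \<le> m"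
  shows "expect (\<lambda>c. \<bar>(\<Sum>u\<in>S. q u * A u) - (\<Sum>k<K. A (c ! k)) / real K\<bar>) \<le> m * sqrt (\<tau> / real K)"
proof (cases "m > 0")
  case True
  define s where "s = sqrt (\<tau> / real K)"
  have K_pos: "real K > 0"
    using K by simp
  have s_pos: "s > 0" and s_sq: "s * s = \<tau> / real K"
    using \<tau> K_pos by (simp_all add: s_def)
  have "(\<Sum>u\<in>S. q u * (A u)\<^sup>2) \<le> (\<Sum>u\<in>S. q u * (\<tau> * m * A u))"
    using A_nonneg A_le by (intro sum_mono mult_left_mono q_nonneg) (simp add: power2_eq_square mult_right_mono)
  also have "\<dots> \<le> \<tau> * m * m"
    using mean_le \<tau> True by (simp add: sum_distrib_left[symmetric] mult_ac mult_left_mono)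
  finally have second_moment: "(\<Sum>u\<in>S. q u * (A u)\<^sup>2) \<le> \<tau> * m * m" .
  have "expect (\<lambda>c. \<bar>(\<Sum>u\<in>S. q u * A u) - (\<Sum>k<K. A (c ! k)) / real K\<bar>)
      \<le> (\<Sum>u\<in>S. q u * (A u)\<^sup>2) / (real K * 2 * (m * s)) + m * s / 2"
    using True s_pos by (intro expect_abs_dev_empirical_mean K) simp
  also have "\<dots> \<le> \<tau> * m * m / (real K * 2 * (m * s)) + m * s / 2"
    using True s_pos K_pos second_moment by (intro add_right_mono divide_right_mono) auto
  also have "\<tau> * m * m / (real K * 2 * (m * s)) = m * s / 2"
    using True s_pos K_pos s_sq by (simp add: field_simps)
  finally show ?thesis
    by (simp add: s_def)
next
  case False
  moreover have "(\<Sum>u\<in>S. q u * A u) \<ge> 0"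
    by (intro sum_nonneg mult_nonneg_nonneg q_nonneg A_nonneg)
  then have "m \<ge> 0"
    using mean_le by linarith
  ultimately have "m = 0"
    by simp
  then have "A u = 0" for u
    using A_nonneg[of u] A_le[of u] by simp
  then show ?thesis
    using \<open>m = 0\<close> by simp
qed

text \<open>Soft covering: below the threshold \<open>\<tau> \<mu>\<close> the previous lemma applies, and the tail
  \<open>g > \<tau> \<mu>\<close> is paid for twice, once in the mean and once in the empirical mean.\<close>

lemma expect_abs_dev_empirical_mean_truncated:
  assumes K: "K \<ge> 1" and \<tau>: "\<tau> > 0" and g_nonneg: "\<And>u. g u \<ge> 0"
  defines "\<mu> \<equiv> \<Sum>u\<in>S. q u * g u"
  shows "expect (\<lambda>c. \<bar>\<mu> - (\<Sum>k<K. g (c ! k)) / real K\<bar>)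
           \<le> 2 * (\<Sum>u\<in>S. q u * g u * (if g u > \<tau> * \<mu> then 1 else 0)) + \<mu> * sqrt (\<tau> / real K)"
proof -
  define A where "A u = g u * (if g u \<le> \<tau> * \<mu> then 1 else 0)" for u
  define B where "B u = g u * (if g u > \<tau> * \<mu> then 1 else 0)" for u
  define \<beta> where "\<beta> = (\<Sum>u\<in>S. q u * B u)"
  have A_nonneg: "A u \<ge> 0" and B_nonneg: "B u \<ge> 0" for u
    using g_nonneg by (simp_all add: A_def B_def)
  have g_eq: "g u = A u + B u" for u
    by (simp add: A_def B_def)
  have \<mu>_eq: "\<mu> = (\<Sum>u\<in>S. q u * A u) + \<beta>"
    by (simp add: \<mu>_def \<beta>_def g_eq distrib_left sum.distrib)
  have "\<beta> \<ge> 0"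
    by (simp add: \<beta>_def sum_nonneg q_nonneg B_nonneg)
  have "\<bar>\<mu> - (\<Sum>k<K. g (c ! k)) / real K\<bar>
      \<le> \<beta> + \<bar>(\<Sum>u\<in>S. q u * A u) - (\<Sum>k<K. A (c ! k)) / real K\<bar> + (\<Sum>k<K. B (c ! k)) / real K" for c
  proof -
    have "\<mu> - (\<Sum>k<K. g (c ! k)) / real K
        = \<beta> + ((\<Sum>u\<in>S. q u * A u) - (\<Sum>k<K. A (c ! k)) / real K) - (\<Sum>k<K. B (c ! k)) / real K"
      by (simp add: \<mu>_eq g_eq sum.distrib add_divide_distrib)
    moreover have "(\<Sum>k<K. B (c ! k)) / real K \<ge> 0"
      by (simp add: sum_nonneg B_nonneg)
    ultimately show ?thesis
      using \<open>\<beta> \<ge> 0\<close> by linarith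
  qed
  then have "expect (\<lambda>c. \<bar>\<mu> - (\<Sum>k<K. g (c ! k)) / real K\<bar>)
      \<le> expect (\<lambda>c. \<beta> + \<bar>(\<Sum>u\<in>S. q u * A u) - (\<Sum>k<K. A (c ! k)) / real K\<bar>
                      + (\<Sum>k<K. B (c ! k)) / real K)"
    by (intro expect_mono)
  also have "\<dots> = \<beta> + expect (\<lambda>c. \<bar>(\<Sum>u\<in>S. q u * A u) - (\<Sum>k<K. A (c ! k)) / real K\<bar>) + \<beta>"
    using expect_cmult[of "1 / real K" "\<lambda>c. \<Sum>k<K. B (c ! k)"] K
    by (simp add: expect_add expect_sum expect_nth \<beta>_def)
  also have "\<dots> \<le> \<beta> + \<mu> * sqrt (\<tau> / real K) + \<beta>"
  proof -
    have "\<mu> \<ge> 0"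
      unfolding \<mu>_def by (intro sum_nonneg mult_nonneg_nonneg q_nonneg g_nonneg)
    then have "A u \<le> \<tau> * \<mu>" for u
      using \<tau> by (simp add: A_def)
    moreover have "(\<Sum>u\<in>S. q u * A u) \<le> \<mu>"
      using \<mu>_eq \<open>\<beta> \<ge> 0\<close> by linarith
    ultimately show ?thesis
      using expect_abs_dev_empirical_mean_bounded[where A=A and m=\<mu>, OF K \<tau>] A_nonneg by simp
  qed
  finally show ?thesis
    by (simp add: \<beta>_def B_def mult.assoc)
qed

end

section \<open>Chernoff bounds for information densities\<close>

definition mgf :: "('a::finite \<Rightarrow> 'b::finite \<Rightarrow> real) \<Rightarrow> ('a \<Rightarrow> 'b \<Rightarrow> real) \<Rightarrow> real \<Rightarrow> real" where
  "mgf p d t = (\<Sum>a\<in>UNIV. \<Sum>b\<in>UNIV. p a b * exp (t * d a b))"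

lemma mgf_nonneg: "(\<And>a b. p a b \<ge> 0) \<Longrightarrow> mgf p d t \<ge> 0"
  unfolding mgf_def by (intro sum_nonneg) auto

lemma mgf_at_0: "mgf p d 0 = (\<Sum>a\<in>UNIV. \<Sum>b\<in>UNIV. p a b)"
  by (simp add: mgf_def)

lemma mgf_has_derivative_at_0:
  "(mgf p d has_real_derivative (\<Sum>a\<in>UNIV. \<Sum>b\<in>UNIV. p a b * d a b)) (at 0)"
  unfolding mgf_def[abs_def] by (auto intro!: derivative_eq_intros simp: mult.commute)

lemma mgf_less_1:
  assumes "(\<Sum>a\<in>UNIV. \<Sum>b\<in>UNIV. p a b) = 1"
  shows "(\<Sum>a\<in>UNIV. \<Sum>b\<in>UNIV. p a b * d a b) < 0 \<Longrightarrow> \<exists>t>0. mgf p d t < 1"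
    and "(\<Sum>a\<in>UNIV. \<Sum>b\<in>UNIV. p a b * d a b) > 0 \<Longrightarrow> \<exists>t<0. mgf p d t < 1"
proof -
  note deriv = mgf_has_derivative_at_0[of p d]
  have at_0: "mgf p d 0 = 1" by (simp add: mgf_at_0 assms)
  show "\<exists>t>0. mgf p d t < 1" if neg: "(\<Sum>a\<in>UNIV. \<Sum>b\<in>UNIV. p a b * d a b) < 0"
  proof -
    obtain e where "e > 0" "\<And>h. 0 < h \<Longrightarrow> h < e \<Longrightarrow> mgf p d (0 + h) < mgf p d 0"
      using DERIV_neg_dec_right[OF deriv neg] by blast
    then show ?thesis using at_0 by (intro exI[of _ "e / 2"]) auto
  qed
  show "\<exists>t<0. mgf p d t < 1" if pos: "(\<Sum>a\<in>UNIV. \<Sum>b\<in>UNIV. p a b * d a b) > 0"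
  proof -
    obtain e where "e > 0" "\<And>h. 0 < h \<Longrightarrow> h < e \<Longrightarrow> mgf p d (0 - h) < mgf p d 0"
      using DERIV_pos_inc_left[OF deriv pos] by blast
    then show ?thesis using at_0 by (intro exI[of _ "- e / 2"]) auto
  qed
qed

lemma iid2_mult_exp: "iid2 n (\<lambda>a b. p a b * exp (t * d a b)) us xs =
    iid2 n p us xs * exp (t * (\<Sum>i<n. d (us ! i) (xs ! i)))"
  by (simp add: iid2_def prod.distrib exp_sum sum_distrib_left)

lemma chernoff_bound_iid2:
  fixes p :: "'a::finite \<Rightarrow> 'b::finite \<Rightarrow> real"
  assumes nonneg: "\<And>a b. p a b \<ge> 0"
    and event: "\<And>us xs. \<forall>i<n. p (us ! i) (xs ! i) > 0 \<Longrightarrow> E us xs \<Longrightarrow>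
                  t * (\<Sum>i<n. d (us ! i) (xs ! i)) \<ge> 0"
  shows "(\<Sum>us\<in>seqs n. \<Sum>xs\<in>seqs n. iid2 n p us xs * (if E us xs then 1 else 0)) \<le> mgf p d t ^ n"
proof -
  have "iid2 n p us xs * (if E us xs then 1 else 0) \<le> iid2 n (\<lambda>a b. p a b * exp (t * d a b)) us xs"
    for us xs
  proof (cases "(\<forall>i<n. p (us ! i) (xs ! i) > 0) \<and> E us xs")
    case True
    then have "1 \<le> exp (t * (\<Sum>i<n. d (us ! i) (xs ! i)))"
      using event by simp
    then have "iid2 n p us xs * 1 \<le> iid2 n p us xs * exp (t * (\<Sum>i<n. d (us ! i) (xs ! i)))"
      by (intro mult_left_mono iid2_nonneg nonneg)
    then show ?thesis
      using True by (simp add: iid2_mult_exp)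
  next
    case False
    then have "E us xs \<Longrightarrow> \<exists>i<n. p (us ! i) (xs ! i) = 0"
      using nonneg by (force simp: less_le)
    then have "E us xs \<Longrightarrow> iid2 n p us xs = 0"
      by (auto intro: iid2_eq_0)
    moreover have "iid2 n (\<lambda>a b. p a b * exp (t * d a b)) us xs \<ge> 0"
      by (intro iid2_nonneg mult_nonneg_nonneg nonneg) simp
    ultimately show ?thesis by auto
  qed
  then have "(\<Sum>us\<in>seqs n. \<Sum>xs\<in>seqs n. iid2 n p us xs * (if E us xs then 1 else 0))
      \<le> (\<Sum>us\<in>seqs n. \<Sum>xs\<in>seqs n. iid2 n (\<lambda>a b. p a b * exp (t * d a b)) us xs)"
    by (intro sum_mono)
  then show ?thesis by (simp add: sum_sum_iid2 mgf_def)
qed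

lemma mutual_info_swap: "mutual_info (\<lambda>b a. p a b) = mutual_info p"
  unfolding mutual_info_def by (subst sum.swap) (intro sum.cong refl, simp only: mult.commute)

locale joint_pmf =
  fixes p :: "'a::finite \<Rightarrow> 'b::finite \<Rightarrow> real"
  assumes nonneg: "\<And>a b. p a b \<ge> 0" and sum_eq_1: "(\<Sum>a\<in>UNIV. \<Sum>b\<in>UNIV. p a b) = 1"
begin

definition marg1 :: "'a \<Rightarrow> real" where "marg1 a = (\<Sum>b\<in>UNIV. p a b)"
definition marg2 :: "'b \<Rightarrow> real" where "marg2 b = (\<Sum>a\<in>UNIV. p a b)"

text \<open>The information density, in nats.\<close>

definition info_density :: "'a \<Rightarrow> 'b \<Rightarrow> real" where
  "info_density a b = ln (p a b / (marg1 a * marg2 b))"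

lemma marg1_pos: "p a b > 0 \<Longrightarrow> marg1 a > 0"
  unfolding marg1_def by (rule order.strict_trans2[of _ "p a b"]) (auto intro!: member_le_sum nonneg)

lemma marg2_pos: "p a b > 0 \<Longrightarrow> marg2 b > 0"
  unfolding marg2_def by (rule order.strict_trans2[of _ "p a b"]) (auto intro!: member_le_sum nonneg)

lemma mean_info_density: "(\<Sum>a\<in>UNIV. \<Sum>b\<in>UNIV. p a b * info_density a b) = ln 2 * mutual_info p"
  unfolding mutual_info_def sum_distrib_left[of "ln 2"]
  by (intro sum.cong refl) (simp add: info_density_def log_def marg1_def marg2_def)

lemma iid_marg_pos:
  assumes "\<forall>i<n. p (us ! i) (xs ! i) > 0"
  shows "iid n marg1 us * iid n marg2 xs > 0"
  using assms marg1_pos marg2_pos by (auto simp: iid_def intro!: mult_pos_pos prod_pos)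

lemma iid2_eq_threshold_mult_exp:
  assumes "\<forall>i<n. p (us ! i) (xs ! i) > 0"
  shows "iid2 n p us xs = exp (real n * \<gamma>) * iid n marg1 us * iid n marg2 xs
                           * exp (\<Sum>i<n. info_density (us ! i) (xs ! i) - \<gamma>)"
proof -
  have "p a b = exp \<gamma> * marg1 a * marg2 b * exp (info_density a b - \<gamma>)" if "p a b > 0" for a b
    using that marg1_pos[OF that] marg2_pos[OF that] by (simp add: info_density_def exp_diff)
  then have "iid2 n p us xs =
      (\<Prod>i<n. exp \<gamma> * marg1 (us ! i) * marg2 (xs ! i) * exp (info_density (us ! i) (xs ! i) - \<gamma>))"
    using assms unfolding iid2_def by (intro prod.cong) auto
  then show ?thesis
    by (simp add: iid_def exp_sum prod.distrib exp_of_nat_mult)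
qed

lemma upper_tail_bound:
  assumes "t > 0"
  shows "(\<Sum>us\<in>seqs n. \<Sum>xs\<in>seqs n. iid2 n p us xs *
           (if iid2 n p us xs > exp (real n * \<gamma>) * iid n marg1 us * iid n marg2 xs then 1 else 0))
         \<le> mgf p (\<lambda>a b. info_density a b - \<gamma>) t ^ n"
proof (rule chernoff_bound_iid2[OF nonneg])
  fix us xs
  assume pos: "\<forall>i<n. p (us ! i) (xs ! i) > 0"
    and tail: "iid2 n p us xs > exp (real n * \<gamma>) * iid n marg1 us * iid n marg2 xs"
  define thr where "thr = exp (real n * \<gamma>) * iid n marg1 us * iid n marg2 xs"
  have "thr > 0"
    using iid_marg_pos[OF pos] by (simp add: thr_def mult.assoc)
  moreover have "thr * 1 < thr * exp (\<Sum>i<n. info_density (us ! i) (xs ! i) - \<gamma>)"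
    using tail unfolding mult_1_right iid2_eq_threshold_mult_exp[OF pos, of \<gamma>] thr_def .
  ultimately have "exp (\<Sum>i<n. info_density (us ! i) (xs ! i) - \<gamma>) > 1"
    by (metis mult_less_cancel_left_pos)
  then show "t * (\<Sum>i<n. info_density (us ! i) (xs ! i) - \<gamma>) \<ge> 0"
    using assms by simp
qed

lemma lower_tail_bound:
  assumes "t < 0"
  shows "(\<Sum>us\<in>seqs n. \<Sum>xs\<in>seqs n. iid2 n p us xs *
           (if iid2 n p us xs < exp (real n * \<gamma>) * iid n marg1 us * iid n marg2 xs then 1 else 0))
         \<le> mgf p (\<lambda>a b. info_density a b - \<gamma>) t ^ n"
proof (rule chernoff_bound_iid2[OF nonneg])
  fix us xs
  assume pos: "\<forall>i<n. p (us ! i) (xs ! i) > 0"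
    and tail: "iid2 n p us xs < exp (real n * \<gamma>) * iid n marg1 us * iid n marg2 xs"
  define thr where "thr = exp (real n * \<gamma>) * iid n marg1 us * iid n marg2 xs"
  have "thr > 0"
    using iid_marg_pos[OF pos] by (simp add: thr_def mult.assoc)
  moreover have "thr * exp (\<Sum>i<n. info_density (us ! i) (xs ! i) - \<gamma>) < thr * 1"
    using tail unfolding mult_1_right iid2_eq_threshold_mult_exp[OF pos, of \<gamma>] thr_def .
  ultimately have "exp (\<Sum>i<n. info_density (us ! i) (xs ! i) - \<gamma>) < 1"
    by (metis mult_less_cancel_left_pos)
  then show "t * (\<Sum>i<n. info_density (us ! i) (xs ! i) - \<gamma>) \<ge> 0"
    using assms by (simp add: mult_nonpos_nonpos)
qed

lemma mgf_info_density_less_1: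
  shows "\<gamma> > ln 2 * mutual_info p \<Longrightarrow> \<exists>t>0. mgf p (\<lambda>a b. info_density a b - \<gamma>) t < 1"
    and "\<gamma> < ln 2 * mutual_info p \<Longrightarrow> \<exists>t<0. mgf p (\<lambda>a b. info_density a b - \<gamma>) t < 1"
proof -
  have "(\<Sum>a\<in>UNIV. \<Sum>b\<in>UNIV. p a b * (info_density a b - \<gamma>)) = ln 2 * mutual_info p - \<gamma>"
    by (simp add: right_diff_distrib sum_subtractf sum_distrib_right[symmetric] sum_eq_1
        mean_info_density)
  then show "\<gamma> > ln 2 * mutual_info p \<Longrightarrow> \<exists>t>0. mgf p (\<lambda>a b. info_density a b - \<gamma>) t < 1"
    and "\<gamma> < ln 2 * mutual_info p \<Longrightarrow> \<exists>t<0. mgf p (\<lambda>a b. info_density a b - \<gamma>) t < 1"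
    using mgf_less_1[OF sum_eq_1, of "\<lambda>a b. info_density a b - \<gamma>"] by simp_all
qed

end

section \<open>The source and the test channel\<close>

lemma if_eq_0_mult: "(if t = 0 then 0 else t * c) = (t * c :: real)"
  by simp

locale source_channel =
  fixes PXZ :: "'x::finite \<Rightarrow> 'z::finite \<Rightarrow> real"
    and PU_X :: "'x \<Rightarrow> 'u::finite \<Rightarrow> real"
  assumes PXZ_nonneg: "\<And>x z. PXZ x z \<ge> 0"
    and sum_PXZ: "(\<Sum>x\<in>UNIV. \<Sum>z\<in>UNIV. PXZ x z) = 1"
    and PU_X_nonneg: "\<And>x u. PU_X x u \<ge> 0"
    and sum_PU_X: "\<And>x. (\<Sum>u\<in>UNIV. PU_X x u) = 1"
begin

text \<open>Marginals and conditionals of \<open>P\<^sub>U\<^sub>X\<^sub>Z = P\<^sub>X\<^sub>Z P\<^sub>U\<^sub>|\<^sub>X\<close>; conditionals are 0 where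
  the conditioning marginal vanishes.\<close>

definition pX :: "'x \<Rightarrow> real" where "pX x = (\<Sum>z\<in>UNIV. PXZ x z)"
definition pZ :: "'z \<Rightarrow> real" where "pZ z = (\<Sum>x\<in>UNIV. PXZ x z)"
definition pZ_X :: "'x \<Rightarrow> 'z \<Rightarrow> real" where "pZ_X x z = PXZ x z / pX x"
definition pUX :: "'u \<Rightarrow> 'x \<Rightarrow> real" where "pUX u x = pX x * PU_X x u"
definition pU :: "'u \<Rightarrow> real" where "pU u = (\<Sum>x\<in>UNIV. pUX u x)"
definition pX_U :: "'u \<Rightarrow> 'x \<Rightarrow> real" where "pX_U u x = pUX u x / pU u"
definition pUZ :: "'u \<Rightarrow> 'z \<Rightarrow> real" where "pUZ u z = (\<Sum>x\<in>UNIV. PXZ x z * PU_X x u)"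
definition pZ_U :: "'u \<Rightarrow> 'z \<Rightarrow> real" where "pZ_U u z = pUZ u z / pU u"

lemma pX_nonneg: "pX x \<ge> 0"
  by (simp add: pX_def sum_nonneg PXZ_nonneg)

lemma pZ_nonneg: "pZ z \<ge> 0"
  by (simp add: pZ_def sum_nonneg PXZ_nonneg)

lemma pZ_X_nonneg: "pZ_X x z \<ge> 0"
  by (simp add: pZ_X_def PXZ_nonneg pX_nonneg)

lemma pUX_nonneg: "pUX u x \<ge> 0"
  by (simp add: pUX_def pX_nonneg PU_X_nonneg)

lemma pU_nonneg: "pU u \<ge> 0"
  by (simp add: pU_def sum_nonneg pUX_nonneg)

lemma pX_U_nonneg: "pX_U u x \<ge> 0"
  by (simp add: pX_U_def pUX_nonneg pU_nonneg)

lemma pUZ_nonneg: "pUZ u z \<ge> 0"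
  by (simp add: pUZ_def sum_nonneg PXZ_nonneg PU_X_nonneg)

lemma pZ_U_nonneg: "pZ_U u z \<ge> 0"
  by (simp add: pZ_U_def pUZ_nonneg pU_nonneg)

lemma sum_pX: "(\<Sum>x\<in>UNIV. pX x) = 1"
  by (simp add: pX_def sum_PXZ)

lemma sum_pU: "(\<Sum>u\<in>UNIV. pU u) = 1"
  unfolding pU_def pUX_def
  by (subst sum.swap) (simp add: sum_distrib_left[symmetric] sum_PU_X sum_pX)

lemma sum_pUX_left: "(\<Sum>u\<in>UNIV. pUX u x) = pX x"
  by (simp add: pUX_def sum_distrib_left[symmetric] sum_PU_X)

lemma sum_pUZ_right: "(\<Sum>z\<in>UNIV. pUZ u z) = pU u"
  unfolding pUZ_def pU_def pUX_def pX_def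
  by (subst sum.swap) (simp add: sum_distrib_right)

lemma sum_pUZ_left: "(\<Sum>u\<in>UNIV. pUZ u z) = pZ z"
  unfolding pUZ_def pZ_def
  by (subst sum.swap) (simp add: sum_distrib_left[symmetric] sum_PU_X)

lemma PXZ_eq_0_if_pX: "pX x = 0 \<Longrightarrow> PXZ x z = 0"
  using sum_nonneg_eq_0_iff[of UNIV "PXZ x"] PXZ_nonneg by (auto simp: pX_def)

lemma PXZ_eq_0_if_pZ: "pZ z = 0 \<Longrightarrow> PXZ x z = 0"
  using sum_nonneg_eq_0_iff[of UNIV "\<lambda>x. PXZ x z"] PXZ_nonneg by (auto simp: pZ_def)

lemma pUX_eq_0_if_pU: "pU u = 0 \<Longrightarrow> pUX u x = 0"
  using sum_nonneg_eq_0_iff[of UNIV "pUX u"] pUX_nonneg by (auto simp: pU_def)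

lemma pUZ_eq_0_if_pU: "pU u = 0 \<Longrightarrow> pUZ u z = 0"
  using sum_nonneg_eq_0_iff[of UNIV "pUZ u"] pUZ_nonneg sum_pUZ_right by auto

lemma PXZ_eq: "PXZ x z = pX x * pZ_X x z"
  using PXZ_eq_0_if_pX[of x z] by (cases "pX x = 0") (auto simp: pZ_X_def)

lemma pUX_eq: "pUX u x = pU u * pX_U u x"
  using pUX_eq_0_if_pU[of u x] by (cases "pU u = 0") (auto simp: pX_U_def)

lemma pUZ_eq: "pUZ u z = pU u * pZ_U u z"
  using pUZ_eq_0_if_pU[of u z] by (cases "pU u = 0") (auto simp: pZ_U_def)

lemma sum_pZ_X_le_1: "(\<Sum>z\<in>UNIV. pZ_X x z) \<le> 1"
  by (cases "pX x = 0") (simp_all add: pZ_X_def sum_divide_distrib[symmetric] pX_def[symmetric])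

lemma sum_pZ_U_le_1: "(\<Sum>z\<in>UNIV. pZ_U u z) \<le> 1"
  by (cases "pU u = 0") (simp_all add: pZ_U_def sum_divide_distrib[symmetric] sum_pUZ_right)

lemma pZ_U_eq_sum: "pZ_U u z = (\<Sum>x\<in>UNIV. pX_U u x * pZ_X x z)"
proof -
  have "pX_U u x * pZ_X x z = PXZ x z * PU_X x u / pU u" for x
    using PXZ_eq_0_if_pX[of x z] by (cases "pX x = 0") (simp_all add: pX_U_def pUX_def pZ_X_def)
  then show ?thesis
    by (simp add: pZ_U_def pUZ_def sum_divide_distrib)
qed

lemma joint_pmf_pUX: "joint_pmf pUX"
  by unfold_locales (simp_all add: pUX_nonneg pU_def[symmetric] sum_pU)

lemma joint_pmf_pUZ: "joint_pmf pUZ"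
  by unfold_locales (simp_all add: pUZ_nonneg sum_pUZ_right sum_pU)

lemma marginals_pUX: "joint_pmf.marg1 pUX = pU" "joint_pmf.marg2 pUX = pX"
  by (simp_all add: fun_eq_iff joint_pmf.marg1_def[OF joint_pmf_pUX]
      joint_pmf.marg2_def[OF joint_pmf_pUX] pU_def sum_pUX_left)

lemma marginals_pUZ: "joint_pmf.marg1 pUZ = pU" "joint_pmf.marg2 pUZ = pZ"
  by (simp_all add: fun_eq_iff joint_pmf.marg1_def[OF joint_pmf_pUZ]
      joint_pmf.marg2_def[OF joint_pmf_pUZ] sum_pUZ_right sum_pUZ_left)

lemma sum_iid_pU: "(\<Sum>us\<in>seqs n. iid n pU us) = 1"
  by (simp add: sum_iid sum_pU)

lemma sum_iid_pX: "(\<Sum>xs\<in>seqs n. iid n pX xs) = 1"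
  by (simp add: sum_iid sum_pX)

lemma sum_iid2_pZ_X_le_1: "(\<Sum>zs\<in>seqs n. iid2 n pZ_X xs zs) \<le> 1"
  unfolding sum_iid2_right by (rule iid_le_1) (simp_all add: sum_nonneg pZ_X_nonneg sum_pZ_X_le_1)

lemma sum_iid2_pZ_U_le_1: "(\<Sum>zs\<in>seqs n. iid2 n pZ_U us zs) \<le> 1"
  unfolding sum_iid2_right by (rule iid_le_1) (simp_all add: sum_nonneg pZ_U_nonneg sum_pZ_U_le_1)

lemma sum_iid2_pX_U_mult_pZ_X:
  "(\<Sum>xs\<in>seqs n. iid2 n pX_U us xs * iid2 n pZ_X xs zs) = iid2 n pZ_U us zs"
  by (simp add: sum_iid2_mult_iid2 pZ_U_eq_sum[symmetric])

lemma sum_iid_pU_mult_pX_U: "(\<Sum>us\<in>seqs n. iid n pU us * iid2 n pX_U us xs) = iid n pX xs"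
  by (simp add: sum_iid_mult_iid2 pUX_eq[symmetric] sum_pUX_left)

lemma sum_iid_pU_mult_pZ_U: "(\<Sum>us\<in>seqs n. iid n pU us * iid2 n pZ_U us zs) = iid n pZ zs"
  by (simp add: sum_iid_mult_iid2 pUZ_eq[symmetric] sum_pUZ_left)

lemma iid_PXZ_eq: "(\<Prod>i<n. PXZ (xs ! i) (zs ! i)) = iid n pX xs * iid2 n pZ_X xs zs"
  by (simp add: iid_def iid2_def prod.distrib[symmetric] PXZ_eq[symmetric])

lemma iid_codebook_seqs: "iid_codebook (seqs n) (iid n pU)"
  by unfold_locales (simp_all add: iid_nonneg pU_nonneg sum_iid_pU)

lemma iid2_pUX_eq: "iid2 n pUX us xs = iid n pU us * iid2 n pX_U us xs"
  by (simp add: iid_mult_iid2 pUX_eq[abs_def])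

lemma iid2_pUZ_eq: "iid2 n pUZ us zs = iid n pU us * iid2 n pZ_U us zs"
  by (simp add: iid_mult_iid2 pUZ_eq[abs_def])

lemma PXZ_mult_PU_X_le_pUZ: "PXZ x z * PU_X x u \<le> pUZ u z"
  unfolding pUZ_def by (rule member_le_sum) (auto intro: mult_nonneg_nonneg PXZ_nonneg PU_X_nonneg)

lemma mutual_info_pUX_eq_sum3:
  "mutual_info (\<lambda>x u. pUX u x) = (\<Sum>x\<in>UNIV. \<Sum>u\<in>UNIV. \<Sum>z\<in>UNIV.
     if PXZ x z * PU_X x u = 0 then 0 else PXZ x z * PU_X x u * log 2 (PU_X x u / pU u))"
  unfolding mutual_info_def
proof (intro sum.cong refl)
  fix x u
  show "(if pUX u x = 0 then 0
         else pUX u x * log 2 (pUX u x / ((\<Sum>u'\<in>UNIV. pUX u' x) * (\<Sum>x'\<in>UNIV. pUX u x')))) =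
        (\<Sum>z\<in>UNIV. if PXZ x z * PU_X x u = 0 then 0
                   else PXZ x z * PU_X x u * log 2 (PU_X x u / pU u))"
  proof (cases "pUX u x = 0")
    case True
    then have "PXZ x z * PU_X x u = 0" for z
      using PXZ_eq_0_if_pX by (auto simp: pUX_def)
    then show ?thesis using True by simp
  next
    case False
    then have "pX x > 0"
      using pX_nonneg PU_X_nonneg by (auto simp: pUX_def less_le)
    then have "pUX u x / (pX x * pU u) = PU_X x u / pU u"
      by (simp add: pUX_def)
    moreover have "(\<Sum>z\<in>UNIV. if PXZ x z * PU_X x u = 0 then 0
                      else PXZ x z * PU_X x u * log 2 (PU_X x u / pU u))
                 = pUX u x * log 2 (PU_X x u / pU u)"
      by (simp only: if_eq_0_mult) (simp add: sum_distrib_right[symmetric] pUX_def pX_def)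
    ultimately show ?thesis
      using False by (simp add: sum_pUX_left pU_def[symmetric])
  qed
qed

lemma mutual_info_pUZ_eq_sum3:
  "mutual_info pUZ = (\<Sum>u\<in>UNIV. \<Sum>z\<in>UNIV. \<Sum>x\<in>UNIV.
     if PXZ x z * PU_X x u = 0 then 0 else PXZ x z * PU_X x u * log 2 (pUZ u z / (pU u * pZ z)))"
  unfolding mutual_info_def
proof (intro sum.cong refl)
  fix u z
  show "(if pUZ u z = 0 then 0
         else pUZ u z * log 2 (pUZ u z / ((\<Sum>z'\<in>UNIV. pUZ u z') * (\<Sum>u'\<in>UNIV. pUZ u' z)))) =
        (\<Sum>x\<in>UNIV. if PXZ x z * PU_X x u = 0 then 0
                   else PXZ x z * PU_X x u * log 2 (pUZ u z / (pU u * pZ z)))"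
  proof (cases "pUZ u z = 0")
    case True
    then have "PXZ x z * PU_X x u = 0" for x
      using PXZ_mult_PU_X_le_pUZ[of x z u] PXZ_nonneg[of x z] PU_X_nonneg[of x u]
      by (metis antisym zero_le_mult_iff)
    then show ?thesis using True by simp
  next
    case False
    have "(\<Sum>x\<in>UNIV. if PXZ x z * PU_X x u = 0 then 0
                      else PXZ x z * PU_X x u * log 2 (pUZ u z / (pU u * pZ z)))
          = pUZ u z * log 2 (pUZ u z / (pU u * pZ z))"
      by (simp only: if_eq_0_mult) (simp add: sum_distrib_right[symmetric] pUZ_def)
    then show ?thesis
      using False by (simp add: sum_pUZ_right sum_pUZ_left)
  qed
qed

lemma PXZ_PU_X_mult_log_ratio_le:
  assumes "PXZ x z * PU_X x u \<noteq> 0"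
  shows "PXZ x z * PU_X x u * (log 2 (pUZ u z / (pU u * pZ z)) - log 2 (PU_X x u / pU u))
           \<le> (PXZ x z * pUZ u z / pZ z - PXZ x z * PU_X x u) / ln 2"
proof -
  have PXZ_pos: "PXZ x z > 0" and PU_X_pos: "PU_X x u > 0"
    using assms PXZ_nonneg[of x z] PU_X_nonneg[of x u] by (auto simp: less_le)
  have pZ_pos: "pZ z > 0"
    using PXZ_eq_0_if_pZ[of z x] PXZ_pos pZ_nonneg[of z] by (auto simp: less_le)
  have pUZ_pos: "pUZ u z > 0"
    using PXZ_mult_PU_X_le_pUZ[of x z u] mult_pos_pos[OF PXZ_pos PU_X_pos] by linarith
  have pU_pos: "pU u > 0"
    using pUZ_eq_0_if_pU[of u z] pUZ_pos pU_nonneg[of u] by (auto simp: less_le)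
  define t where "t = pUZ u z / (pZ z * PU_X x u)"
  have t_pos: "t > 0"
    using pUZ_pos pZ_pos PU_X_pos by (simp add: t_def)
  have "log 2 (pUZ u z / (pU u * pZ z)) - log 2 (PU_X x u / pU u) = log 2 t"
    using pUZ_pos pU_pos pZ_pos PU_X_pos by (simp add: t_def log_divide log_mult)
  also have "\<dots> \<le> (t - 1) / ln 2"
    using ln_le_minus_one[OF t_pos] by (simp add: log_def divide_right_mono)
  finally have "PXZ x z * PU_X x u * (log 2 (pUZ u z / (pU u * pZ z)) - log 2 (PU_X x u / pU u))
      \<le> PXZ x z * PU_X x u * ((t - 1) / ln 2)"
    using PXZ_pos PU_X_pos by (intro mult_left_mono) auto
  also have "\<dots> = (PXZ x z * pUZ u z / pZ z - PXZ x z * PU_X x u) / ln 2"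
    using pZ_pos PU_X_pos by (simp add: t_def field_simps)
  finally show ?thesis .
qed

lemma sum_PXZ_mult_pUZ_div_pZ:
  "(\<Sum>x\<in>UNIV. \<Sum>u\<in>UNIV. \<Sum>z\<in>UNIV. PXZ x z * pUZ u z / pZ z) = 1"
proof -
  have "(\<Sum>x\<in>UNIV. PXZ x z * pUZ u z / pZ z) = pUZ u z" for u z
    using pUZ_eq_0_if_pU PXZ_eq_0_if_pZ[of z]
    by (cases "pZ z = 0")
       (simp_all add: pUZ_def sum_divide_distrib[symmetric] sum_distrib_right[symmetric]
         pZ_def[symmetric])
  then show ?thesis
    by (simp add: sum_rotate3[of "\<lambda>x u z. PXZ x z * pUZ u z / pZ z"] sum_pUZ_right sum_pU)
qed

text \<open>Data processing for the Markov chain \<open>Z - X - U\<close>: with \<open>a = P\<^sub>X\<^sub>Z P\<^sub>U\<^sub>|\<^sub>X\<close>, the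
  difference of the two mutual informations is \<open>\<Sum> a log (b / a)\<close> for the probability
  \<open>b = P\<^sub>X\<^sub>Z P\<^sub>U\<^sub>Z / P\<^sub>Z\<close>, and \<open>log t \<le> (t - 1) / ln 2\<close> bounds it by \<open>\<Sum> (b - a) / ln 2 = 0\<close>.\<close>

lemma mutual_info_pUZ_le_pUX: "mutual_info pUZ \<le> mutual_info pUX"
proof -
  define a where "a x u z = PXZ x z * PU_X x u" for x u z
  define logratio where "logratio x u z = log 2 (pUZ u z / (pU u * pZ z)) - log 2 (PU_X x u / pU u)"
    for x u z
  have "(\<Sum>u\<in>UNIV. \<Sum>z\<in>UNIV. a x u z) = (\<Sum>z\<in>UNIV. PXZ x z)" for x
    unfolding a_def by (subst sum.swap) (simp add: sum_distrib_left[symmetric] sum_PU_X)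
  then have sum_a: "(\<Sum>x\<in>UNIV. \<Sum>u\<in>UNIV. \<Sum>z\<in>UNIV. a x u z) = 1"
    by (simp add: sum_PXZ)
  have if_diff_if_eq: "(if c then 0 else t * p) - (if c then 0 else t * q) = (if c then 0 else t * (p - q))"
    for c and t p q :: real
    by (simp add: right_diff_distrib)
  have "mutual_info pUZ = (\<Sum>x\<in>UNIV. \<Sum>u\<in>UNIV. \<Sum>z\<in>UNIV.
      if a x u z = 0 then 0 else a x u z * log 2 (pUZ u z / (pU u * pZ z)))"
    unfolding mutual_info_pUZ_eq_sum3 a_def by (rule sum_rotate3[symmetric])
  moreover have "mutual_info pUX = (\<Sum>x\<in>UNIV. \<Sum>u\<in>UNIV. \<Sum>z\<in>UNIV.
      if a x u z = 0 then 0 else a x u z * log 2 (PU_X x u / pU u))"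
    unfolding mutual_info_swap[of pUX, symmetric] mutual_info_pUX_eq_sum3 a_def ..
  ultimately have "mutual_info pUZ - mutual_info pUX =
        (\<Sum>x\<in>UNIV. \<Sum>u\<in>UNIV. \<Sum>z\<in>UNIV. if a x u z = 0 then 0 else a x u z * logratio x u z)"
    by (simp only: sum_subtractf[symmetric] if_diff_if_eq logratio_def)
  also have "\<dots> \<le> (\<Sum>x\<in>UNIV. \<Sum>u\<in>UNIV. \<Sum>z\<in>UNIV. (PXZ x z * pUZ u z / pZ z - a x u z) / ln 2)"
    unfolding a_def logratio_def
    by (intro sum_mono) (simp add: PXZ_PU_X_mult_log_ratio_le PXZ_nonneg pUZ_nonneg pZ_nonneg)
  also have "\<dots> = 0"
    by (simp add: sum_divide_distrib[symmetric] sum_subtractf sum_PXZ_mult_pUZ_div_pZ sum_a)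
  finally show ?thesis by simp
qed

end

section \<open>The likelihood encoder and decoder\<close>

definition bin :: "nat \<Rightarrow> nat \<Rightarrow> nat set" where
  "bin L m = {(m - 1) * L ..< m * L}"

lemma finite_bin [simp]: "finite (bin L m)"
  by (simp add: bin_def)

lemma card_bin: "m \<ge> 1 \<Longrightarrow> card (bin L m) = L"
  by (cases m) (simp_all add: bin_def)

lemma first_in_bin: "m \<ge> 1 \<Longrightarrow> L \<ge> 1 \<Longrightarrow> (m - 1) * L \<in> bin L m"
  by (cases m) (simp_all add: bin_def)

lemma in_bin_div:
  assumes "L \<ge> 1"
  shows "k \<in> bin L (k div L + 1)"
proof -
  have k: "k div L * L + k mod L = k"
    by simp
  moreover have "k mod L < L"
    using assms by simp
  ultimately have "k < k div L * L + L"
    by linarith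
  then show ?thesis
    using k by (simp add: bin_def algebra_simps)
qed

lemma bin_div_eq: "m \<ge> 1 \<Longrightarrow> k \<in> bin L m \<Longrightarrow> k div L + 1 = m"
  unfolding bin_def by (cases m) (auto intro: div_nat_eqI simp: mult.commute)

lemma bin_div_range: "(L::nat) \<ge> 1 \<Longrightarrow> k < T * L \<Longrightarrow> k div L + 1 \<in> {1..T}"
  using less_mult_imp_div_less[of k T L] by auto

lemma bin_subset: "m \<in> {1..T} \<Longrightarrow> bin L m \<subseteq> {..<T * L}"
  by (auto simp: bin_def) (meson le_less_trans mult_le_mono1 less_le_trans)

lemma sum_lessThan_eq_sum_bins:
  "(\<Sum>k<T * L. f k) = (\<Sum>m\<in>{1..T}. \<Sum>k\<in>bin L m. (f k :: 'a::comm_monoid_add))"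
proof (induction T)
  case (Suc T)
  have "(\<Sum>k<Suc T * L. f k) = (\<Sum>k<T * L. f k) + (\<Sum>k\<in>{T * L..<Suc T * L}. f k)"
    unfolding atLeast0LessThan[symmetric] by (rule sum.atLeastLessThan_concat[symmetric]) auto
  also have "{T * L..<Suc T * L} = bin L (Suc T)"
    by (simp add: bin_def)
  moreover have "{1..Suc T} = insert (Suc T) {1..T}"
    by auto
  ultimately show ?case
    using Suc by (simp add: add.commute)
qed simp

locale wyner_ziv = source_channel PXZ PU_X
  for PXZ :: "'x::finite \<Rightarrow> 'z::finite \<Rightarrow> real" and PU_X :: "'x \<Rightarrow> 'u::finite \<Rightarrow> real" +
  fixes W :: "'y::finite \<Rightarrow> 'z \<Rightarrow> 'x \<Rightarrow> real"
    and PY_UZ :: "'u \<Rightarrow> 'z \<Rightarrow> 'y \<Rightarrow> real"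
  assumes W_nonneg: "\<And>y z x. W y z x \<ge> 0"
    and sum_W: "\<And>y z. (\<Sum>x\<in>UNIV. W y z x) = 1"
    and PY_UZ_nonneg: "\<And>u z y. PY_UZ u z y \<ge> 0"
    and sum_PY_UZ: "\<And>u z. (\<Sum>y\<in>UNIV. PY_UZ u z y) = 1"
    and posterior: "\<And>u x y z. PXZ x z * PU_X x u * PY_UZ u z y =
                      (\<Sum>x'\<in>UNIV. PXZ x' z * PU_X x' u * PY_UZ u z y) * W y z x"
begin

lemma sum_iid3_PY_UZ: "(\<Sum>ys\<in>seqs n. iid3 n PY_UZ us zs ys) = 1"
  by (simp add: sum_iid3_right iid2_def sum_PY_UZ)

lemma sum_iid3_W: "(\<Sum>xs\<in>seqs n. iid3 n W ys zs xs) = 1"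
  by (simp add: sum_iid3_right iid2_def sum_W)

lemma posterior_given_codeword:
  "pX_U u x * pZ_X x z * PY_UZ u z y = (\<Sum>x'\<in>UNIV. pX_U u x' * pZ_X x' z * PY_UZ u z y) * W y z x"
proof -
  have "pX_U u x * pZ_X x z * PY_UZ u z y = PXZ x z * PU_X x u * PY_UZ u z y / pU u" for x
    using PXZ_eq_0_if_pX[of x z] by (cases "pX x = 0") (simp_all add: pX_U_def pUX_def pZ_X_def)
  then show ?thesis
    by (simp add: posterior[where u=u and x=x and y=y and z=z] sum_divide_distrib[symmetric])
qed

lemma iid_posterior_given_codeword:
  "iid2 n pX_U us xs * iid2 n pZ_X xs zs * iid3 n PY_UZ us zs ys =
   (\<Sum>xs'\<in>seqs n. iid2 n pX_U us xs' * iid2 n pZ_X xs' zs * iid3 n PY_UZ us zs ys) * iid3 n W ys zs xs"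
proof -
  have prod: "iid2 n pX_U us xs' * iid2 n pZ_X xs' zs * iid3 n PY_UZ us zs ys =
      (\<Prod>i<n. pX_U (us ! i) (xs' ! i) * pZ_X (xs' ! i) (zs ! i) * PY_UZ (us ! i) (zs ! i) (ys ! i))"
    for xs'
    by (simp add: iid2_def iid3_def prod.distrib)
  have sum_eq: "(\<Sum>xs'\<in>seqs n. \<Prod>i<n. pX_U (us ! i) (xs' ! i) * pZ_X (xs' ! i) (zs ! i) *
        PY_UZ (us ! i) (zs ! i) (ys ! i)) =
      (\<Prod>i<n. \<Sum>a\<in>UNIV. pX_U (us ! i) a * pZ_X a (zs ! i) * PY_UZ (us ! i) (zs ! i) (ys ! i))"
    by (rule sum_seqs_prod)
  show ?thesis
    unfolding prod sum_eq unfolding iid3_def prod.distrib[symmetric]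
    by (intro prod.cong refl) (rule posterior_given_codeword)
qed

text \<open>Degenerate normalisations fall back to a fixed message or index.\<close>

definition lik_total :: "nat \<Rightarrow> 'u list list \<Rightarrow> 'x list \<Rightarrow> real" where
  "lik_total n c xs = (\<Sum>k<length c. iid2 n pX_U (c ! k) xs)"

definition encoder :: "nat \<Rightarrow> nat \<Rightarrow> 'u list list \<Rightarrow> 'x list \<Rightarrow> nat \<Rightarrow> real" where
  "encoder n L c xs m =
     (if lik_total n c xs > 0 then (\<Sum>k\<in>bin L m. iid2 n pX_U (c ! k) xs) / lik_total n c xs
      else if m = 1 then 1 else 0)"

definition bin_lik :: "nat \<Rightarrow> nat \<Rightarrow> 'u list list \<Rightarrow> nat \<Rightarrow> 'z list \<Rightarrow> real" where
  "bin_lik n L c m zs = (\<Sum>k\<in>bin L m. iid2 n pZ_U (c ! k) zs)"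

definition bin_posterior :: "nat \<Rightarrow> nat \<Rightarrow> 'u list list \<Rightarrow> nat \<Rightarrow> 'z list \<Rightarrow> nat \<Rightarrow> real" where
  "bin_posterior n L c m zs k =
     (if bin_lik n L c m zs > 0 then iid2 n pZ_U (c ! k) zs / bin_lik n L c m zs
      else if k = (m - 1) * L then 1 else 0)"

definition decoder :: "nat \<Rightarrow> nat \<Rightarrow> 'u list list \<Rightarrow> nat \<Rightarrow> 'z list \<Rightarrow> 'y list \<Rightarrow> real" where
  "decoder n L c m zs ys = (\<Sum>k\<in>bin L m. bin_posterior n L c m zs k * iid3 n PY_UZ (c ! k) zs ys)"

lemma lik_total_nonneg: "lik_total n c xs \<ge> 0"
  by (simp add: lik_total_def sum_nonneg iid2_nonneg pX_U_nonneg)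

lemma encoder_nonneg: "encoder n L c xs m \<ge> 0"
  using lik_total_nonneg by (auto simp: encoder_def sum_nonneg iid2_nonneg pX_U_nonneg)

lemma sum_encoder:
  assumes "length c = T * L" "T \<ge> 1"
  shows "(\<Sum>m\<in>{1..T}. encoder n L c xs m) = 1"
proof (cases "lik_total n c xs > 0")
  case True
  have "(\<Sum>m\<in>{1..T}. \<Sum>k\<in>bin L m. iid2 n pX_U (c ! k) xs) = lik_total n c xs"
    unfolding lik_total_def assms(1) by (rule sum_lessThan_eq_sum_bins[symmetric])
  then show ?thesis
    using True by (simp add: encoder_def sum_divide_distrib[symmetric])
next
  case False
  then show ?thesis
    using assms(2) by (simp add: encoder_def)
qed

lemma lik_total_mult_encoder:
  assumes "m \<in> {1..T}" "length c = T * L"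
  shows "lik_total n c xs * encoder n L c xs m = (\<Sum>k\<in>bin L m. iid2 n pX_U (c ! k) xs)"
proof (cases "lik_total n c xs > 0")
  case False
  then have "lik_total n c xs = 0"
    using lik_total_nonneg[of n c xs] by simp
  then have "\<forall>k\<in>{..<length c}. iid2 n pX_U (c ! k) xs = 0"
    unfolding lik_total_def by (subst sum_nonneg_eq_0_iff[symmetric]) (auto simp: iid2_nonneg pX_U_nonneg)
  moreover have "bin L m \<subseteq> {..<length c}"
    using bin_subset[OF assms(1)] assms(2) by simp
  ultimately show ?thesis
    using \<open>lik_total n c xs = 0\<close> by (simp add: subset_iff)
qed (simp add: encoder_def)

lemma bin_posterior_nonneg: "bin_posterior n L c m zs k \<ge> 0"
  by (simp add: bin_posterior_def bin_lik_def iid2_nonneg pZ_U_nonneg)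

lemma sum_bin_posterior:
  assumes "m \<ge> 1" "L \<ge> 1"
  shows "(\<Sum>k\<in>bin L m. bin_posterior n L c m zs k) = 1"
proof (cases "bin_lik n L c m zs > 0")
  case True
  then show ?thesis
    by (simp add: bin_posterior_def sum_divide_distrib[symmetric] bin_lik_def[symmetric])
next
  case False
  then show ?thesis
    using first_in_bin[OF assms] by (simp add: bin_posterior_def)
qed

lemma decoder_nonneg: "decoder n L c m zs ys \<ge> 0"
  unfolding decoder_def
  by (intro sum_nonneg mult_nonneg_nonneg bin_posterior_nonneg iid3_nonneg PY_UZ_nonneg)

lemma sum_decoder:
  assumes "m \<ge> 1" "L \<ge> 1"
  shows "(\<Sum>ys\<in>seqs n. decoder n L c m zs ys) = 1"
  unfolding decoder_def
  by (subst sum.swap) (simp add: sum_distrib_left[symmetric] sum_iid3_PY_UZ sum_bin_posterior[OF assms])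

lemma is_protocol_code:
  assumes "length c = T * L" "T \<ge> 1" "L \<ge> 1"
  shows "is_protocol n T (encoder n L c) (decoder n L c)"
  unfolding is_protocol_def
  using assms encoder_nonneg sum_encoder decoder_nonneg sum_decoder by auto

end

section \<open>Error analysis of a fixed code\<close>

context wyner_ziv
begin

definition code_channel :: "nat \<Rightarrow> nat \<Rightarrow> nat \<Rightarrow> 'u list list \<Rightarrow> 'x list \<Rightarrow> 'z list \<Rightarrow> 'y list \<Rightarrow> real"
  where "code_channel n T L c xs zs ys = (\<Sum>m\<in>{1..T}. encoder n L c xs m * decoder n L c m zs ys)"

text \<open>The joint law of \<open>(X\<^sup>n, Y\<^sup>n, Z\<^sup>n)\<close> when the codeword \<open>U\<^sup>n\<close> is drawn uniformly from
  the codebook and \<open>X\<^sup>n, Z\<^sup>n, Y\<^sup>n\<close> are generated by the single-letter model; the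
  posterior of \<open>X\<^sup>n\<close> under it is exactly \<open>W\<^sup>n\<close>.\<close>

definition ideal_joint :: "nat \<Rightarrow> 'u list list \<Rightarrow> 'x list \<Rightarrow> 'y list \<Rightarrow> 'z list \<Rightarrow> real" where
  "ideal_joint n c xs ys zs =
     (\<Sum>k<length c. iid2 n pX_U (c ! k) xs * iid2 n pZ_X xs zs * iid3 n PY_UZ (c ! k) zs ys)
       / length c"

lemma ideal_joint_posterior:
  "ideal_joint n c xs ys zs = (\<Sum>xs'\<in>seqs n. ideal_joint n c xs' ys zs) * iid3 n W ys zs xs"
  unfolding ideal_joint_def
  by (subst iid_posterior_given_codeword)
     (simp add: sum_divide_distrib[symmetric] sum_distrib_right sum.swap[of _ "seqs n"])

lemma code_channel_nonneg: "code_channel n T L c xs zs ys \<ge> 0"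
  unfolding code_channel_def by (intro sum_nonneg mult_nonneg_nonneg encoder_nonneg decoder_nonneg)

lemma sum_code_channel:
  assumes "length c = T * L" "T \<ge> 1" "L \<ge> 1"
  shows "(\<Sum>ys\<in>seqs n. code_channel n T L c xs zs ys) = 1"
proof -
  have "(\<Sum>ys\<in>seqs n. code_channel n T L c xs zs ys) =
        (\<Sum>m\<in>{1..T}. encoder n L c xs m * (\<Sum>ys\<in>seqs n. decoder n L c m zs ys))"
    unfolding code_channel_def by (subst sum.swap) (simp add: sum_distrib_left)
  also have "\<dots> = (\<Sum>m\<in>{1..T}. encoder n L c xs m)"
    using assms(3) by (intro sum.cong) (auto simp: sum_decoder)
  finally show ?thesis
    using sum_encoder[OF assms(1,2)] by simp
qed

lemma induced_joint_code:
  "induced_joint PXZ n T (encoder n L c) (decoder n L c) xs ys zs =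
   iid n pX xs * iid2 n pZ_X xs zs * code_channel n T L c xs zs ys"
  by (simp add: induced_joint_def iid_PXZ_eq code_channel_def)

lemma protocol_error_le_ideal:
  assumes "length c = T * L" "T \<ge> 1" "L \<ge> 1"
  shows "protocol_error PXZ W n T (encoder n L c) (decoder n L c) \<le>
    (\<Sum>xs\<in>seqs n. \<Sum>ys\<in>seqs n. \<Sum>zs\<in>seqs n.
       \<bar>induced_joint PXZ n T (encoder n L c) (decoder n L c) xs ys zs - ideal_joint n c xs ys zs\<bar>)"
  unfolding protocol_error_def Let_def
  using sum_abs_diff_posterior_le[where V="\<lambda>ys zs xs. iid3 n W ys zs xs" and A="seqs n"
      and Q="ideal_joint n c" and B="seqs n" and C="seqs n"
      and P="induced_joint PXZ n T (encoder n L c) (decoder n L c)"]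
  by (simp add: iid3_def[symmetric] iid3_nonneg W_nonneg sum_iid3_W ideal_joint_posterior[symmetric])

text \<open>Decoding from the bin of \<open>k\<close> deviates from the channel of codeword \<open>k\<close> only when
  the decoder picks another index of the bin.\<close>

lemma sum_abs_decoder_minus_codeword:
  assumes "m \<ge> 1" "L \<ge> 1" "k \<in> bin L m"
  shows "(\<Sum>ys\<in>seqs n. \<bar>decoder n L c m zs ys - iid3 n PY_UZ (c ! k) zs ys\<bar>)
           \<le> 2 * (1 - bin_posterior n L c m zs k)"
proof -
  let ?lam = "bin_posterior n L c m zs" and ?q = "\<lambda>k ys. iid3 n PY_UZ (c ! k) zs ys"
  have sum_lam: "(\<Sum>k'\<in>bin L m. ?lam k') = 1"
    using sum_bin_posterior[OF assms(1,2)] .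
  have "decoder n L c m zs ys - ?q k ys = (\<Sum>k'\<in>bin L m. ?lam k' * (?q k' ys - ?q k ys))" for ys
    by (simp add: decoder_def right_diff_distrib sum_subtractf sum_distrib_right[symmetric] sum_lam)
  then have "(\<Sum>ys\<in>seqs n. \<bar>decoder n L c m zs ys - ?q k ys\<bar>)
      \<le> (\<Sum>ys\<in>seqs n. \<Sum>k'\<in>bin L m. ?lam k' * \<bar>?q k' ys - ?q k ys\<bar>)"
    by (intro sum_mono) (simp add: order.trans[OF sum_abs] abs_mult bin_posterior_nonneg)
  also have "\<dots> = (\<Sum>k'\<in>bin L m. ?lam k' * (\<Sum>ys\<in>seqs n. \<bar>?q k' ys - ?q k ys\<bar>))"
    by (subst sum.swap) (simp add: sum_distrib_left)
  also have "\<dots> \<le> (\<Sum>k'\<in>bin L m. ?lam k' * (if k' = k then 0 else 2))"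
  proof (intro sum_mono mult_left_mono bin_posterior_nonneg)
    fix k'
    have "(\<Sum>ys\<in>seqs n. \<bar>?q k' ys - ?q k ys\<bar>) \<le> (\<Sum>ys\<in>seqs n. ?q k' ys + ?q k ys)"
      by (intro sum_mono) (simp add: iid3_nonneg PY_UZ_nonneg abs_le_iff)
    then show "(\<Sum>ys\<in>seqs n. \<bar>?q k' ys - ?q k ys\<bar>) \<le> (if k' = k then 0 else 2)"
      by (simp add: sum.distrib sum_iid3_PY_UZ)
  qed
  also have "\<dots> = (\<Sum>k'\<in>bin L m. 2 * ?lam k' - (if k' = k then 2 * ?lam k else 0))"
    by (intro sum.cong) auto
  also have "\<dots> = 2 * (1 - ?lam k)"
    using assms(3) by (simp add: sum_subtractf sum_distrib_left[symmetric] sum_lam right_diff_distrib)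
  finally show ?thesis .
qed

text \<open>The induced joint law with the source marginal \<open>P\<^sub>X\<^sup>n\<close> replaced by the output
  distribution of the codebook, \<open>lik_total / |c|\<close>.\<close>

definition approx_joint :: "nat \<Rightarrow> nat \<Rightarrow> nat \<Rightarrow> 'u list list \<Rightarrow> 'x list \<Rightarrow> 'y list \<Rightarrow> 'z list \<Rightarrow> real"
  where "approx_joint n T L c xs ys zs =
           lik_total n c xs / length c * iid2 n pZ_X xs zs * code_channel n T L c xs zs ys"

lemma approx_joint_eq_sum_codewords:
  assumes "length c = T * L" "L \<ge> 1"
  shows "approx_joint n T L c xs ys zs =
    (\<Sum>k<length c. iid2 n pX_U (c ! k) xs * iid2 n pZ_X xs zs * decoder n L c (k div L + 1) zs ys)
      / length c"
proof -
  have "lik_total n c xs * code_channel n T L c xs zs ys =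
        (\<Sum>m\<in>{1..T}. (lik_total n c xs * encoder n L c xs m) * decoder n L c m zs ys)"
    by (simp add: code_channel_def sum_distrib_left mult.assoc)
  also have "\<dots> = (\<Sum>m\<in>{1..T}. \<Sum>k\<in>bin L m. iid2 n pX_U (c ! k) xs * decoder n L c (k div L + 1) zs ys)"
  proof (intro sum.cong refl)
    fix m
    assume m: "m \<in> {1..T}"
    then show "lik_total n c xs * encoder n L c xs m * decoder n L c m zs ys =
        (\<Sum>k\<in>bin L m. iid2 n pX_U (c ! k) xs * decoder n L c (k div L + 1) zs ys)"
      using bin_div_eq[of m] by (simp add: lik_total_mult_encoder[OF m assms(1)] sum_distrib_right)
  qed
  also have "\<dots> = (\<Sum>k<length c. iid2 n pX_U (c ! k) xs * decoder n L c (k div L + 1) zs ys)"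
    by (simp add: assms(1) sum_lessThan_eq_sum_bins)
  finally show ?thesis
    by (simp add: approx_joint_def sum_distrib_left sum_distrib_right mult_ac)
qed

lemma sum_abs_induced_minus_approx:
  assumes "length c = T * L" "T \<ge> 1" "L \<ge> 1"
  shows "(\<Sum>xs\<in>seqs n. \<Sum>ys\<in>seqs n. \<Sum>zs\<in>seqs n.
           \<bar>induced_joint PXZ n T (encoder n L c) (decoder n L c) xs ys zs - approx_joint n T L c xs ys zs\<bar>)
         \<le> (\<Sum>xs\<in>seqs n. \<bar>iid n pX xs - lik_total n c xs / length c\<bar>)"
proof (intro sum_mono)
  fix xs :: "'x list"
  let ?d = "\<bar>iid n pX xs - lik_total n c xs / length c\<bar>"
  have "(\<Sum>ys\<in>seqs n. \<Sum>zs\<in>seqs n.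
          \<bar>induced_joint PXZ n T (encoder n L c) (decoder n L c) xs ys zs - approx_joint n T L c xs ys zs\<bar>)
      = ?d * (\<Sum>zs\<in>seqs n. iid2 n pZ_X xs zs * (\<Sum>ys\<in>seqs n. code_channel n T L c xs zs ys))"
  proof -
    have "\<bar>induced_joint PXZ n T (encoder n L c) (decoder n L c) xs ys zs - approx_joint n T L c xs ys zs\<bar>
        = ?d * (iid2 n pZ_X xs zs * code_channel n T L c xs zs ys)" for ys zs
    proof -
      have "induced_joint PXZ n T (encoder n L c) (decoder n L c) xs ys zs - approx_joint n T L c xs ys zs
          = (iid n pX xs - lik_total n c xs / length c) * (iid2 n pZ_X xs zs * code_channel n T L c xs zs ys)"
        unfolding induced_joint_code approx_joint_def by (simp add: left_diff_distrib mult.assoc)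
      then show ?thesis
        by (simp add: abs_mult iid2_nonneg pZ_X_nonneg code_channel_nonneg)
    qed
    then show ?thesis
      by (subst sum.swap) (simp add: sum_distrib_left)
  qed
  also have "\<dots> \<le> ?d"
    using sum_iid2_pZ_X_le_1[of n xs] by (simp add: sum_code_channel[OF assms] mult_left_le)
  finally show "(\<Sum>ys\<in>seqs n. \<Sum>zs\<in>seqs n.
          \<bar>induced_joint PXZ n T (encoder n L c) (decoder n L c) xs ys zs - approx_joint n T L c xs ys zs\<bar>)
      \<le> ?d" .
qed

lemma sum_codeword_deviation_le:
  assumes "L \<ge> 1"
  shows "(\<Sum>xs\<in>seqs n. \<Sum>ys\<in>seqs n. \<Sum>zs\<in>seqs n. iid2 n pX_U (c ! k) xs * iid2 n pZ_X xs zs *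
            \<bar>decoder n L c (k div L + 1) zs ys - iid3 n PY_UZ (c ! k) zs ys\<bar>)
         \<le> 2 * (\<Sum>zs\<in>seqs n. iid2 n pZ_U (c ! k) zs * (1 - bin_posterior n L c (k div L + 1) zs k))"
proof -
  define dev where "dev zs ys = \<bar>decoder n L c (k div L + 1) zs ys - iid3 n PY_UZ (c ! k) zs ys\<bar>"
    for zs ys
  have "(\<Sum>xs\<in>seqs n. \<Sum>ys\<in>seqs n. \<Sum>zs\<in>seqs n. iid2 n pX_U (c ! k) xs * iid2 n pZ_X xs zs * dev zs ys)
      = (\<Sum>ys\<in>seqs n. \<Sum>zs\<in>seqs n. \<Sum>xs\<in>seqs n. iid2 n pX_U (c ! k) xs * iid2 n pZ_X xs zs * dev zs ys)"
    by (rule sum_rotate3)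
  also have "\<dots> = (\<Sum>ys\<in>seqs n. \<Sum>zs\<in>seqs n. iid2 n pZ_U (c ! k) zs * dev zs ys)"
    by (simp add: sum_distrib_right[symmetric] sum_iid2_pX_U_mult_pZ_X)
  also have "\<dots> = (\<Sum>zs\<in>seqs n. iid2 n pZ_U (c ! k) zs * (\<Sum>ys\<in>seqs n. dev zs ys))"
    by (subst sum.swap) (simp add: sum_distrib_left)
  also have "\<dots> \<le> (\<Sum>zs\<in>seqs n. iid2 n pZ_U (c ! k) zs * (2 * (1 - bin_posterior n L c (k div L + 1) zs k)))"
    unfolding dev_def using assms
    by (intro sum_mono mult_left_mono sum_abs_decoder_minus_codeword in_bin_div)
       (simp_all add: iid2_nonneg pZ_U_nonneg)
  also have "\<dots> = 2 * (\<Sum>zs\<in>seqs n. iid2 n pZ_U (c ! k) zs * (1 - bin_posterior n L c (k div L + 1) zs k))"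
    by (simp add: sum_distrib_left algebra_simps)
  finally show ?thesis
    by (simp add: dev_def)
qed

lemma sum_abs_approx_minus_ideal:
  assumes "length c = T * L" "T \<ge> 1" "L \<ge> 1"
  shows "(\<Sum>xs\<in>seqs n. \<Sum>ys\<in>seqs n. \<Sum>zs\<in>seqs n.
           \<bar>approx_joint n T L c xs ys zs - ideal_joint n c xs ys zs\<bar>)
         \<le> 2 / length c * (\<Sum>k<length c. \<Sum>zs\<in>seqs n.
              iid2 n pZ_U (c ! k) zs * (1 - bin_posterior n L c (k div L + 1) zs k))"
proof -
  define K where "K = length c"
  have K_pos: "real K > 0"
    using assms by (simp add: K_def)
  define dev where "dev k zs ys = \<bar>decoder n L c (k div L + 1) zs ys - iid3 n PY_UZ (c ! k) zs ys\<bar>"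
    for k zs ys
  have pointwise: "\<bar>approx_joint n T L c xs ys zs - ideal_joint n c xs ys zs\<bar>
      \<le> (\<Sum>k<K. iid2 n pX_U (c ! k) xs * iid2 n pZ_X xs zs * dev k zs ys) / K" for xs ys zs
  proof -
    have "\<bar>approx_joint n T L c xs ys zs - ideal_joint n c xs ys zs\<bar>
        = \<bar>\<Sum>k<K. iid2 n pX_U (c ! k) xs * iid2 n pZ_X xs zs *
             (decoder n L c (k div L + 1) zs ys - iid3 n PY_UZ (c ! k) zs ys)\<bar> / K"
      unfolding approx_joint_eq_sum_codewords[OF assms(1,3)] ideal_joint_def K_def
      by (simp add: diff_divide_distrib[symmetric] sum_subtractf[symmetric] right_diff_distrib)
    also have "\<dots> \<le> (\<Sum>k<K. iid2 n pX_U (c ! k) xs * iid2 n pZ_X xs zs * dev k zs ys) / K"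
      using K_pos
      by (intro divide_right_mono order.trans[OF sum_abs] sum_mono)
         (simp_all add: dev_def abs_mult iid2_nonneg pX_U_nonneg pZ_X_nonneg)
    finally show ?thesis .
  qed
  have "(\<Sum>xs\<in>seqs n. \<Sum>ys\<in>seqs n. \<Sum>zs\<in>seqs n.
           \<bar>approx_joint n T L c xs ys zs - ideal_joint n c xs ys zs\<bar>)
      \<le> (\<Sum>xs\<in>seqs n. \<Sum>ys\<in>seqs n. \<Sum>zs\<in>seqs n.
            (\<Sum>k<K. iid2 n pX_U (c ! k) xs * iid2 n pZ_X xs zs * dev k zs ys) / K)"
    by (intro sum_mono pointwise)
  also have "\<dots> = (\<Sum>k<K. \<Sum>xs\<in>seqs n. \<Sum>ys\<in>seqs n. \<Sum>zs\<in>seqs n.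
            iid2 n pX_U (c ! k) xs * iid2 n pZ_X xs zs * dev k zs ys) / K"
    by (simp only: sum_divide_distrib[symmetric]) (subst sum_sum_sum_sum_swap, rule refl)
  also have "\<dots> \<le> (\<Sum>k<K. 2 * (\<Sum>zs\<in>seqs n.
                      iid2 n pZ_U (c ! k) zs * (1 - bin_posterior n L c (k div L + 1) zs k))) / K"
    using K_pos sum_codeword_deviation_le[OF assms(3)]
    by (intro divide_right_mono sum_mono) (simp_all add: dev_def)
  finally show ?thesis
    by (simp add: K_def sum_distrib_left sum_divide_distrib)
qed

lemma protocol_error_code_le:
  assumes "length c = T * L" "T \<ge> 1" "L \<ge> 1"
  shows "protocol_error PXZ W n T (encoder n L c) (decoder n L c) \<le>
     (\<Sum>xs\<in>seqs n. \<bar>iid n pX xs - lik_total n c xs / length c\<bar>) +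
     2 / length c * (\<Sum>k<length c. \<Sum>zs\<in>seqs n.
        iid2 n pZ_U (c ! k) zs * (1 - bin_posterior n L c (k div L + 1) zs k))"
proof -
  let ?P = "induced_joint PXZ n T (encoder n L c) (decoder n L c)"
  have abs_diff_le_abs_diff_add: "\<bar>a - c\<bar> \<le> \<bar>a - b\<bar> + \<bar>b - c\<bar>" for a b c :: real
    by arith
  have "protocol_error PXZ W n T (encoder n L c) (decoder n L c)
      \<le> (\<Sum>xs\<in>seqs n. \<Sum>ys\<in>seqs n. \<Sum>zs\<in>seqs n. \<bar>?P xs ys zs - ideal_joint n c xs ys zs\<bar>)"
    by (rule protocol_error_le_ideal[OF assms])
  also have "\<dots> \<le> (\<Sum>xs\<in>seqs n. \<Sum>ys\<in>seqs n. \<Sum>zs\<in>seqs n.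
                     \<bar>?P xs ys zs - approx_joint n T L c xs ys zs\<bar>
                   + \<bar>approx_joint n T L c xs ys zs - ideal_joint n c xs ys zs\<bar>)"
    by (intro sum_mono) (rule abs_diff_le_abs_diff_add)
  also have "\<dots> = (\<Sum>xs\<in>seqs n. \<Sum>ys\<in>seqs n. \<Sum>zs\<in>seqs n.
                     \<bar>?P xs ys zs - approx_joint n T L c xs ys zs\<bar>)
                 + (\<Sum>xs\<in>seqs n. \<Sum>ys\<in>seqs n. \<Sum>zs\<in>seqs n.
                     \<bar>approx_joint n T L c xs ys zs - ideal_joint n c xs ys zs\<bar>)"
    by (simp add: sum.distrib)
  also have "\<dots> \<le> (\<Sum>xs\<in>seqs n. \<bar>iid n pX xs - lik_total n c xs / length c\<bar>) +
     2 / length c * (\<Sum>k<length c. \<Sum>zs\<in>seqs n.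
        iid2 n pZ_U (c ! k) zs * (1 - bin_posterior n L c (k div L + 1) zs k))"
    by (rule add_mono[OF sum_abs_induced_minus_approx[OF assms] sum_abs_approx_minus_ideal[OF assms]])
  finally show ?thesis .
qed

end

section \<open>Averaging over the codebook\<close>

context wyner_ziv
begin

definition tail_UX :: "nat \<Rightarrow> real \<Rightarrow> real" where
  "tail_UX n \<tau> = (\<Sum>us\<in>seqs n. \<Sum>xs\<in>seqs n. iid n pU us * iid2 n pX_U us xs *
                   (if iid2 n pX_U us xs > \<tau> * iid n pX xs then 1 else 0))"

definition tail_UZ :: "nat \<Rightarrow> real \<Rightarrow> real" where
  "tail_UZ n \<tau> = (\<Sum>us\<in>seqs n. \<Sum>zs\<in>seqs n. iid n pU us * iid2 n pZ_U us zs *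
                   (if iid2 n pZ_U us zs < \<tau> * iid n pZ zs then 1 else 0))"

lemma lik_total_codebook:
  "c \<in> lists_length (seqs n) K \<Longrightarrow> lik_total n c xs = (\<Sum>k<K. iid2 n pX_U (c ! k) xs)"
  by (simp add: lik_total_def lists_length_def)

lemma expect_soft_covering_term:
  assumes "K \<ge> 1" "\<tau> > 0"
  shows "iid_codebook.expect (seqs n) (iid n pU) K
           (\<lambda>c. \<Sum>xs\<in>seqs n. \<bar>iid n pX xs - lik_total n c xs / length c\<bar>)
         \<le> 2 * tail_UX n \<tau> + sqrt (\<tau> / K)"
proof -
  interpret iid_codebook "seqs n" "iid n pU" K
    by (rule iid_codebook_seqs)
  have "expect (\<lambda>c. \<Sum>xs\<in>seqs n. \<bar>iid n pX xs - lik_total n c xs / length c\<bar>)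
      = (\<Sum>xs\<in>seqs n. expect (\<lambda>c. \<bar>iid n pX xs - (\<Sum>k<K. iid2 n pX_U (c ! k) xs) / K\<bar>))"
    unfolding expect_sum[symmetric]
    by (rule antisym; intro expect_mono) (simp_all add: lik_total_codebook lists_length_def)
  also have "\<dots> \<le> (\<Sum>xs\<in>seqs n. 2 * (\<Sum>us\<in>seqs n. iid n pU us * iid2 n pX_U us xs *
                   (if iid2 n pX_U us xs > \<tau> * iid n pX xs then 1 else 0)) + iid n pX xs * sqrt (\<tau> / K))"
    using expect_abs_dev_empirical_mean_truncated[OF assms, of "\<lambda>us. iid2 n pX_U us xs" for xs]
    by (intro sum_mono) (simp add: iid2_nonneg pX_U_nonneg sum_iid_pU_mult_pX_U)
  also have "\<dots> = 2 * (\<Sum>xs\<in>seqs n. \<Sum>us\<in>seqs n. iid n pU us * iid2 n pX_U us xs *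
                   (if iid2 n pX_U us xs > \<tau> * iid n pX xs then 1 else 0))
                 + (\<Sum>xs\<in>seqs n. iid n pX xs) * sqrt (\<tau> / K)"
    by (simp add: sum.distrib sum_distrib_left sum_distrib_right)
  also have "(\<Sum>xs\<in>seqs n. \<Sum>us\<in>seqs n. iid n pU us * iid2 n pX_U us xs *
                (if iid2 n pX_U us xs > \<tau> * iid n pX xs then 1 else 0)) = tail_UX n \<tau>"
    unfolding tail_UX_def by (rule sum.swap)
  finally show ?thesis
    by (simp add: sum_iid_pX)
qed

lemma codeword_loss_le:
  assumes "m \<ge> 1" "L \<ge> 1" "k \<in> bin L m"
  shows "iid2 n pZ_U (c ! k) zs * (1 - bin_posterior n L c m zs k) \<le> iid2 n pZ_U (c ! k) zs"
    and "iid2 n pZ_U (c ! k) zs * (1 - bin_posterior n L c m zs k)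
           \<le> (\<Sum>k'\<in>bin L m - {k}. iid2 n pZ_U (c ! k') zs)"
proof -
  let ?q = "iid2 n pZ_U (c ! k) zs" and ?r = "\<Sum>k'\<in>bin L m - {k}. iid2 n pZ_U (c ! k') zs"
  have q_nonneg: "?q \<ge> 0" and r_nonneg: "?r \<ge> 0"
    by (simp_all add: sum_nonneg iid2_nonneg pZ_U_nonneg)
  have bin_lik: "bin_lik n L c m zs = ?q + ?r"
    using assms(3) by (simp add: bin_lik_def sum.remove)
  show "?q * (1 - bin_posterior n L c m zs k) \<le> ?q"
    using q_nonneg bin_posterior_nonneg[of n L c m zs k] by (simp add: mult_left_le)
  show "?q * (1 - bin_posterior n L c m zs k) \<le> ?r"
  proof (cases "bin_lik n L c m zs > 0")
    case True
    then have "?q * (1 - bin_posterior n L c m zs k) = ?q * ?r / (?q + ?r)"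
      by (simp add: bin_posterior_def bin_lik field_simps)
    also have "\<dots> \<le> ?r"
      using True q_nonneg r_nonneg bin_lik mult_nonneg_nonneg[OF r_nonneg r_nonneg]
      by (simp add: divide_le_eq algebra_simps)
    finally show ?thesis .
  next
    case False
    then have "?q = 0"
      using bin_lik q_nonneg r_nonneg by simp
    then show ?thesis
      using r_nonneg by simp
  qed
qed

lemma expect_competitor:
  assumes "k' < K" "k < K" "k' \<noteq> k"
  shows "iid_codebook.expect (seqs n) (iid n pU) K (\<lambda>c. iid2 n pZ_U (c ! k') zs * f (c ! k))
           = iid n pZ zs * (\<Sum>us\<in>seqs n. iid n pU us * f us)"
proof -
  interpret iid_codebook "seqs n" "iid n pU" K
    by (rule iid_codebook_seqs)
  show ?thesis
    using expect_nth_mult_nth[OF assms, of "\<lambda>us. iid2 n pZ_U us zs" f]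
    by (simp add: sum_iid_pU_mult_pZ_U)
qed

text \<open>Markov's inequality: an independent codeword explains \<open>zs\<close> \<open>\<tau>\<close> times better than
  \<open>P\<^sub>Z\<^sup>n\<close> with probability at most \<open>1 / \<tau>\<close>.\<close>

lemma sum_iid_pU_pZ_above_threshold_le:
  assumes "\<tau> > 0"
  shows "(\<Sum>us\<in>seqs n. iid n pU us * (\<Sum>zs\<in>seqs n.
           iid n pZ zs * (1 - (if iid2 n pZ_U us zs < \<tau> * iid n pZ zs then 1 else 0)))) \<le> 1 / \<tau>"
proof -
  have "(\<Sum>zs\<in>seqs n. iid n pZ zs * (1 - (if iid2 n pZ_U us zs < \<tau> * iid n pZ zs then 1 else 0)))
      \<le> (\<Sum>zs\<in>seqs n. iid2 n pZ_U us zs / \<tau>)" for us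
    using assms iid_nonneg[of pZ n, OF pZ_nonneg] iid2_nonneg[of pZ_U n us, OF pZ_U_nonneg]
    by (intro sum_mono) (auto simp: field_simps)
  also have "(\<Sum>zs\<in>seqs n. iid2 n pZ_U us zs / \<tau>) \<le> 1 / \<tau>" for us
    using sum_iid2_pZ_U_le_1[of n us] assms by (simp add: sum_divide_distrib[symmetric] divide_right_mono)
  finally have "(\<Sum>us\<in>seqs n. iid n pU us * (\<Sum>zs\<in>seqs n.
      iid n pZ zs * (1 - (if iid2 n pZ_U us zs < \<tau> * iid n pZ zs then 1 else 0))))
      \<le> (\<Sum>us\<in>seqs n. iid n pU us * (1 / \<tau>))"
    by (intro sum_mono mult_left_mono iid_nonneg pU_nonneg)
  then show ?thesis
    by (simp add: sum_distrib_right[symmetric] sum_divide_distrib[symmetric] sum_iid_pU)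
qed

lemma expect_test_split:
  assumes "k < K" "others \<subseteq> {..<K}" "k \<notin> others"
  shows "iid_codebook.expect (seqs n) (iid n pU) K (\<lambda>c. \<Sum>zs\<in>seqs n.
           iid2 n pZ_U (c ! k) zs * I zs (c ! k) + (\<Sum>k'\<in>others. iid2 n pZ_U (c ! k') zs * (1 - I zs (c ! k))))
         = (\<Sum>us\<in>seqs n. \<Sum>zs\<in>seqs n. iid n pU us * iid2 n pZ_U us zs * I zs us)
           + card others * (\<Sum>us\<in>seqs n. iid n pU us * (\<Sum>zs\<in>seqs n. iid n pZ zs * (1 - I zs us)))"
proof -
  interpret iid_codebook "seqs n" "iid n pU" K
    by (rule iid_codebook_seqs)
  have competitor: "expect (\<lambda>c. iid2 n pZ_U (c ! k') zs * (1 - I zs (c ! k)))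
      = iid n pZ zs * (\<Sum>us\<in>seqs n. iid n pU us * (1 - I zs us))" if "k' \<in> others" for k' zs
    using that assms by (intro expect_competitor) auto
  have own: "expect (\<lambda>c. iid2 n pZ_U (c ! k) zs * I zs (c ! k))
      = (\<Sum>us\<in>seqs n. iid n pU us * (iid2 n pZ_U us zs * I zs us))" for zs
    by (rule expect_nth[OF assms(1)])
  have "expect (\<lambda>c. \<Sum>zs\<in>seqs n.
          iid2 n pZ_U (c ! k) zs * I zs (c ! k) + (\<Sum>k'\<in>others. iid2 n pZ_U (c ! k') zs * (1 - I zs (c ! k))))
      = (\<Sum>zs\<in>seqs n. (\<Sum>us\<in>seqs n. iid n pU us * (iid2 n pZ_U us zs * I zs us))
          + card others * (iid n pZ zs * (\<Sum>us\<in>seqs n. iid n pU us * (1 - I zs us))))"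
    by (simp add: expect_sum expect_add own competitor)
  also have "\<dots> = (\<Sum>zs\<in>seqs n. \<Sum>us\<in>seqs n. iid n pU us * iid2 n pZ_U us zs * I zs us)
      + card others * (\<Sum>zs\<in>seqs n. \<Sum>us\<in>seqs n. iid n pU us * (iid n pZ zs * (1 - I zs us)))"
    by (simp add: sum.distrib sum_distrib_left mult_ac)
  also have "\<dots> = (\<Sum>us\<in>seqs n. \<Sum>zs\<in>seqs n. iid n pU us * iid2 n pZ_U us zs * I zs us)
      + card others * (\<Sum>us\<in>seqs n. iid n pU us * (\<Sum>zs\<in>seqs n. iid n pZ zs * (1 - I zs us)))"
    by (subst (1 2) sum.swap) (simp add: sum_distrib_left)
  finally show ?thesis .
qed

text \<open>A codeword is lost only if a competitor in its bin explains \<open>zs\<close> at least as well; this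
  happens either because \<open>c k\<close> itself explains \<open>zs\<close> poorly (the tail \<open>tail_UZ\<close>) or because
  an independent codeword explains it well, which has probability at most \<open>1 / \<tau>\<close> for each of
  the \<open>L - 1\<close> competitors.\<close>

lemma expect_codeword_loss:
  assumes "\<tau> > 0" "L \<ge> 1" "K = T * L" "k < K"
  shows "iid_codebook.expect (seqs n) (iid n pU) K
           (\<lambda>c. \<Sum>zs\<in>seqs n. iid2 n pZ_U (c ! k) zs * (1 - bin_posterior n L c (k div L + 1) zs k))
         \<le> tail_UZ n \<tau> + (real L - 1) / \<tau>"
proof -
  interpret iid_codebook "seqs n" "iid n pU" K
    by (rule iid_codebook_seqs)
  define m where "m = k div L + 1"
  define others where "others = bin L m - {k}"
  define I where "I zs us = (if iid2 n pZ_U us zs < \<tau> * iid n pZ zs then 1 else 0 :: real)" for zs us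
  have k_in_bin: "k \<in> bin L m"
    unfolding m_def by (rule in_bin_div[OF assms(2)])
  have others: "others \<subseteq> {..<K}" "k \<notin> others" "real (card others) = real L - 1"
    using bin_subset[OF bin_div_range[OF assms(2), of k T]] assms(2-4) k_in_bin card_bin[of m L]
    by (auto simp: others_def m_def of_nat_diff)
  have "iid2 n pZ_U (c ! k) zs * (1 - bin_posterior n L c m zs k)
      \<le> iid2 n pZ_U (c ! k) zs * I zs (c ! k) + (\<Sum>k'\<in>others. iid2 n pZ_U (c ! k') zs * (1 - I zs (c ! k)))"
    for c zs
    using codeword_loss_le[of m L k n c zs] k_in_bin assms(2)
    by (simp add: I_def others_def m_def sum_distrib_right[symmetric])
  then have "expect (\<lambda>c. \<Sum>zs\<in>seqs n. iid2 n pZ_U (c ! k) zs * (1 - bin_posterior n L c m zs k))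
      \<le> expect (\<lambda>c. \<Sum>zs\<in>seqs n. iid2 n pZ_U (c ! k) zs * I zs (c ! k)
            + (\<Sum>k'\<in>others. iid2 n pZ_U (c ! k') zs * (1 - I zs (c ! k))))"
    by (intro expect_mono sum_mono)
  also have "\<dots> = tail_UZ n \<tau>
      + (real L - 1) * (\<Sum>us\<in>seqs n. iid n pU us * (\<Sum>zs\<in>seqs n. iid n pZ zs * (1 - I zs us)))"
    unfolding expect_test_split[OF assms(4) others(1,2)] others(3) by (simp add: tail_UZ_def I_def)
  also have "\<dots> \<le> tail_UZ n \<tau> + (real L - 1) * (1 / \<tau>)"
    using sum_iid_pU_pZ_above_threshold_le[OF assms(1), of n] assms(2)
    by (intro add_left_mono mult_left_mono) (simp_all add: I_def)
  finally show ?thesis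
    by (simp add: m_def)
qed

lemma expect_decoding_term:
  assumes "\<tau> > 0" "L \<ge> 1" "K = T * L"
  shows "iid_codebook.expect (seqs n) (iid n pU) K
           (\<lambda>c. \<Sum>k<K. \<Sum>zs\<in>seqs n. iid2 n pZ_U (c ! k) zs * (1 - bin_posterior n L c (k div L + 1) zs k))
         \<le> real K * (tail_UZ n \<tau> + (real L - 1) / \<tau>)"
proof -
  interpret iid_codebook "seqs n" "iid n pU" K
    by (rule iid_codebook_seqs)
  show ?thesis
  proof -
    have "expect (\<lambda>c. \<Sum>k<K. \<Sum>zs\<in>seqs n.
            iid2 n pZ_U (c ! k) zs * (1 - bin_posterior n L c (k div L + 1) zs k))
        = (\<Sum>k<K. expect (\<lambda>c. \<Sum>zs\<in>seqs n.
            iid2 n pZ_U (c ! k) zs * (1 - bin_posterior n L c (k div L + 1) zs k)))"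
      by (rule expect_sum)
    also have "\<dots> \<le> (\<Sum>k<K. tail_UZ n \<tau> + (real L - 1) / \<tau>)"
      by (intro sum_mono expect_codeword_loss[OF assms]) simp
    finally show ?thesis
      by simp
  qed
qed

lemma tail_UX_le_mgf:
  assumes "t > 0"
  shows "tail_UX n (exp (real n * \<gamma>)) \<le> mgf pUX (\<lambda>u x. joint_pmf.info_density pUX u x - \<gamma>) t ^ n"
proof -
  interpret joint_pmf pUX
    by (rule joint_pmf_pUX)
  have "iid n pU us * iid2 n pX_U us xs * (if iid2 n pX_U us xs > exp (real n * \<gamma>) * iid n pX xs then 1 else 0)
      \<le> iid2 n pUX us xs *
         (if iid2 n pUX us xs > exp (real n * \<gamma>) * iid n pU us * iid n pX xs then 1 else 0)" for us xs
  proof (cases "iid n pU us > 0")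
    case True
    then show ?thesis
      by (simp add: iid2_pUX_eq mult.left_commute[of "iid n pU us"])
  next
    case False
    then have "iid n pU us = 0"
      using iid_nonneg[of pU n us, OF pU_nonneg] by simp
    then show ?thesis
      by (simp add: iid2_pUX_eq)
  qed
  then have "tail_UX n (exp (real n * \<gamma>)) \<le> (\<Sum>us\<in>seqs n. \<Sum>xs\<in>seqs n. iid2 n pUX us xs *
      (if iid2 n pUX us xs > exp (real n * \<gamma>) * iid n marg1 us * iid n marg2 xs then 1 else 0))"
    unfolding tail_UX_def marginals_pUX by (intro sum_mono)
  also have "\<dots> \<le> mgf pUX (\<lambda>u x. info_density u x - \<gamma>) t ^ n"
    by (rule upper_tail_bound[OF assms])
  finally show ?thesis .
qed

lemma tail_UZ_le_mgf:
  assumes "t < 0"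
  shows "tail_UZ n (exp (real n * \<gamma>)) \<le> mgf pUZ (\<lambda>u z. joint_pmf.info_density pUZ u z - \<gamma>) t ^ n"
proof -
  interpret joint_pmf pUZ
    by (rule joint_pmf_pUZ)
  have "iid n pU us * iid2 n pZ_U us zs * (if iid2 n pZ_U us zs < exp (real n * \<gamma>) * iid n pZ zs then 1 else 0)
      \<le> iid2 n pUZ us zs *
         (if iid2 n pUZ us zs < exp (real n * \<gamma>) * iid n pU us * iid n pZ zs then 1 else 0)" for us zs
  proof (cases "iid n pU us > 0")
    case True
    then show ?thesis
      by (simp add: iid2_pUZ_eq mult.left_commute[of "iid n pU us"])
  next
    case False
    then have "iid n pU us = 0"
      using iid_nonneg[of pU n us, OF pU_nonneg] by simp
    then show ?thesis
      by (simp add: iid2_pUZ_eq)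
  qed
  then have "tail_UZ n (exp (real n * \<gamma>)) \<le> (\<Sum>us\<in>seqs n. \<Sum>zs\<in>seqs n. iid2 n pUZ us zs *
      (if iid2 n pUZ us zs < exp (real n * \<gamma>) * iid n marg1 us * iid n marg2 zs then 1 else 0))"
    unfolding tail_UZ_def marginals_pUZ by (intro sum_mono)
  also have "\<dots> \<le> mgf pUZ (\<lambda>u z. info_density u z - \<gamma>) t ^ n"
    by (rule lower_tail_bound[OF assms])
  finally show ?thesis .
qed

end

section \<open>Achievability\<close>

lemma achievableI:
  assumes "\<And>\<epsilon>. \<epsilon> > 0 \<Longrightarrow> \<exists>f. f \<longlonglongrightarrow> 0 \<and> (\<forall>\<^sub>F n in sequentially. \<exists>\<Theta> E D.
             is_protocol n \<Theta> E D \<and> log 2 \<Theta> / n \<le> R + \<epsilon> \<and> protocol_error PXZ W n \<Theta> E D \<le> f n)"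
  shows "achievable PXZ W R"
  unfolding achievable_def
proof (intro allI impI)
  fix \<epsilon> :: real
  assume "\<epsilon> > 0"
  then obtain f where "f \<longlonglongrightarrow> 0" and good: "\<forall>\<^sub>F n in sequentially. \<exists>\<Theta> E D.
      is_protocol n \<Theta> E D \<and> log 2 \<Theta> / n \<le> R + \<epsilon> \<and> protocol_error PXZ W n \<Theta> E D \<le> f n"
    using assms by blast
  then have "\<forall>\<^sub>F n in sequentially. f n < \<epsilon>"
    using \<open>\<epsilon> > 0\<close> by (intro order_tendstoD(2)) auto
  with good have "\<forall>\<^sub>F n in sequentially. \<exists>\<Theta> E D.
      is_protocol n \<Theta> E D \<and> log 2 \<Theta> / n \<le> R + \<epsilon> \<and> protocol_error PXZ W n \<Theta> E D \<le> \<epsilon>"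
    by eventually_elim force
  then show "\<exists>N. \<forall>n\<ge>N. \<exists>\<Theta> E D.
      is_protocol n \<Theta> E D \<and> log 2 \<Theta> / n \<le> R + \<epsilon> \<and> protocol_error PXZ W n \<Theta> E D \<le> \<epsilon>"
    by (simp add: eventually_sequentially)
qed

lemma eventually_two_powr_ge_2:
  fixes c :: real
  assumes "c > 0"
  shows "eventually (\<lambda>n. 2 powr (real n * c) \<ge> 2 \<and> n \<ge> 1) sequentially"
proof -
  have large: "2 powr (real n * c) \<ge> 2 \<and> n \<ge> 1" if "n \<ge> nat \<lceil>1 / c\<rceil> + 1" for n :: nat
  proof -
    have "1 / c \<le> real (nat \<lceil>1 / c\<rceil>)"
      by (rule real_nat_ceiling_ge)
    then have "1 / c \<le> real n"
      using that by linarith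
    then have "real n * c \<ge> 1"
      using assms by (simp add: field_simps)
    then show ?thesis
      using that powr_mono[of 1 "real n * c" 2] by simp
  qed
  show ?thesis
    by (rule eventually_mono[OF eventually_ge_at_top large])
qed

text \<open>The code has \<open>\<Theta> \<approx> 2 ^ (n (R + 8 \<delta>))\<close> bins of \<open>L \<approx> 2 ^ (n (I\<^sub>2 - 2 \<delta>))\<close> codewords;
  against the thresholds \<open>2 ^ (n (I\<^sub>1 + \<delta>))\<close> and \<open>2 ^ (n (I\<^sub>2 - \<delta>))\<close> of the soft covering
  and decoding terms this leaves the margins \<open>2 ^ (- 5 n \<delta>)\<close> and \<open>2 ^ (- n \<delta>)\<close>.\<close>

lemma binning_parameters:
  fixes n :: nat and R I\<^sub>1 I\<^sub>2 \<delta> :: real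
  defines "\<Theta> \<equiv> nat \<lfloor>2 powr (n * (R + 8 * \<delta>))\<rfloor>" and "L \<equiv> nat \<lfloor>2 powr (n * (I\<^sub>2 - 2 * \<delta>))\<rfloor> + 1"
  assumes large: "2 powr (n * (R + 8 * \<delta>)) \<ge> 2" and rate: "R \<ge> I\<^sub>1 - I\<^sub>2"
  shows "\<Theta> \<ge> 1" and "log 2 \<Theta> \<le> n * (R + 8 * \<delta>)"
    and "(real L - 1) / 2 powr (n * (I\<^sub>2 - \<delta>)) \<le> (2 powr (- \<delta>)) ^ n"
    and "2 powr (n * (I\<^sub>1 + \<delta>)) / (real \<Theta> * real L) \<le> 2 * (2 powr (- 5 * \<delta>)) ^ n"
proof -
  define X where "X = 2 powr (n * (R + 8 * \<delta>))"
  define Y where "Y = 2 powr (n * (I\<^sub>2 - 2 * \<delta>))"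
  have powr_power: "(2 powr a) ^ n = 2 powr (n * a)" for a :: real
    by (simp add: powr_realpow[symmetric] powr_powr mult.commute)
  have \<Theta>_le: "real \<Theta> \<le> X" and \<Theta>_ge: "real \<Theta> \<ge> X / 2"
    using large by (simp_all add: \<Theta>_def X_def) linarith
  show \<Theta>_pos: "\<Theta> \<ge> 1"
    using large by (simp add: \<Theta>_def le_nat_floor)
  have "log 2 \<Theta> \<le> log 2 X"
    using \<Theta>_pos \<Theta>_le by simp
  then show "log 2 \<Theta> \<le> n * (R + 8 * \<delta>)"
    by (simp add: X_def)
  have "Y > 0"
    by (simp add: Y_def)
  then have L_ge: "real L \<ge> Y" and L_le: "real L - 1 \<le> Y"
    unfolding L_def Y_def[symmetric] by linarith+
  have "(real L - 1) / 2 powr (n * (I\<^sub>2 - \<delta>)) \<le> Y / 2 powr (n * (I\<^sub>2 - \<delta>))"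
    using L_le by (simp add: divide_right_mono)
  also have "\<dots> = (2 powr (- \<delta>)) ^ n"
    by (simp add: Y_def powr_power powr_diff[symmetric] algebra_simps)
  finally show "(real L - 1) / 2 powr (n * (I\<^sub>2 - \<delta>)) \<le> (2 powr (- \<delta>)) ^ n" .
  have "real n * I\<^sub>1 \<le> real n * (R + I\<^sub>2)"
    using rate by (intro mult_left_mono) auto
  then have "2 powr (n * (I\<^sub>1 + 6 * \<delta>) - 1) \<le> 2 powr (n * (R + 8 * \<delta>) + n * (I\<^sub>2 - 2 * \<delta>) - 1)"
    by (simp add: algebra_simps)
  also have "\<dots> = X / 2 * Y"
    by (simp add: X_def Y_def powr_add powr_diff)
  also have "\<dots> \<le> real \<Theta> * real L"
    using \<Theta>_ge L_ge by (intro mult_mono) (simp_all add: Y_def)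
  finally have "2 powr (n * (I\<^sub>1 + \<delta>)) / (real \<Theta> * real L) \<le> 2 powr (n * (I\<^sub>1 + \<delta>)) / 2 powr (n * (I\<^sub>1 + 6 * \<delta>) - 1)"
    using \<Theta>_pos L_ge \<open>Y > 0\<close> by (intro divide_left_mono mult_pos_pos) simp_all
  also have "\<dots> = 2 powr (1 + n * (- 5 * \<delta>))"
    by (simp add: powr_diff[symmetric] algebra_simps)
  also have "\<dots> = 2 * (2 powr (- 5 * \<delta>)) ^ n"
    by (simp only: powr_add powr_power) simp
  finally show "2 powr (n * (I\<^sub>1 + \<delta>)) / (real \<Theta> * real L) \<le> 2 * (2 powr (- 5 * \<delta>)) ^ n" .
qed

context wyner_ziv
begin

lemma exists_code_error_le:
  assumes "T \<ge> 1" "L \<ge> 1" "\<tau>\<^sub>0 > 0" "\<tau>\<^sub>1 > 0"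
  shows "\<exists>c. length c = T * L \<and>
           protocol_error PXZ W n T (encoder n L c) (decoder n L c)
             \<le> 2 * tail_UX n \<tau>\<^sub>0 + sqrt (\<tau>\<^sub>0 / (T * L)) + 2 * (tail_UZ n \<tau>\<^sub>1 + (real L - 1) / \<tau>\<^sub>1)"
proof -
  define K where "K = T * L"
  have K: "K \<ge> 1"
    using assms(1,2) by (simp add: K_def)
  interpret iid_codebook "seqs n" "iid n pU" K
    by (rule iid_codebook_seqs)
  define bound where "bound c = (\<Sum>xs\<in>seqs n. \<bar>iid n pX xs - lik_total n c xs / length c\<bar>) +
     2 / K * (\<Sum>k<K. \<Sum>zs\<in>seqs n. iid2 n pZ_U (c ! k) zs * (1 - bin_posterior n L c (k div L + 1) zs k))"
    for c
  obtain c where c: "c \<in> lists_length (seqs n) K" and c_le: "bound c \<le> expect bound"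
    using exists_le_expect by blast
  have "expect bound \<le> (2 * tail_UX n \<tau>\<^sub>0 + sqrt (\<tau>\<^sub>0 / K)) + 2 / K * (K * (tail_UZ n \<tau>\<^sub>1 + (real L - 1) / \<tau>\<^sub>1))"
    unfolding bound_def expect_add expect_cmult
    using expect_soft_covering_term[OF K assms(3)] expect_decoding_term[OF assms(4,2) K_def] K
    by (intro add_mono mult_left_mono) auto
  moreover have "length c = K"
    using c by (simp add: lists_length_def)
  moreover have "protocol_error PXZ W n T (encoder n L c) (decoder n L c) \<le> bound c"
    using protocol_error_code_le[of c T L n] \<open>length c = K\<close> assms(1,2) by (simp add: K_def bound_def)
  ultimately show ?thesis
    using c_le K by (intro exI[of _ c]) (auto simp: K_def)
qed

lemma exists_protocol_error_le:
  fixes n :: nat and R \<delta> t\<^sub>1 t\<^sub>2 :: real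
  defines "a \<equiv> mgf pUX (\<lambda>u x. joint_pmf.info_density pUX u x - ln 2 * (mutual_info pUX + \<delta>)) t\<^sub>1"
    and "b \<equiv> mgf pUZ (\<lambda>u z. joint_pmf.info_density pUZ u z - ln 2 * (mutual_info pUZ - \<delta>)) t\<^sub>2"
  assumes large: "2 powr (n * (R + 8 * \<delta>)) \<ge> 2" and rate: "R \<ge> mutual_info pUX - mutual_info pUZ"
    and n: "n \<ge> 1" and t\<^sub>1: "t\<^sub>1 > 0" and t\<^sub>2: "t\<^sub>2 < 0"
  shows "\<exists>\<Theta> E D. is_protocol n \<Theta> E D \<and> log 2 \<Theta> / n \<le> R + 8 * \<delta> \<and>
           protocol_error PXZ W n \<Theta> E D
             \<le> 2 * a ^ n + sqrt (2 * (2 powr (- 5 * \<delta>)) ^ n) + 2 * (b ^ n + (2 powr (- \<delta>)) ^ n)"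
proof -
  define \<Theta> where "\<Theta> = nat \<lfloor>2 powr (n * (R + 8 * \<delta>))\<rfloor>"
  define L where "L = nat \<lfloor>2 powr (n * (mutual_info pUZ - 2 * \<delta>))\<rfloor> + 1"
  define \<tau>\<^sub>0 where "\<tau>\<^sub>0 = 2 powr (n * (mutual_info pUX + \<delta>))"
  define \<tau>\<^sub>1 where "\<tau>\<^sub>1 = 2 powr (n * (mutual_info pUZ - \<delta>))"
  note sizes = binning_parameters[OF large rate, folded \<Theta>_def L_def \<tau>\<^sub>0_def \<tau>\<^sub>1_def]
  have \<tau>_eq: "exp (real n * (ln 2 * (mutual_info pUX + \<delta>))) = \<tau>\<^sub>0"
    "exp (real n * (ln 2 * (mutual_info pUZ - \<delta>))) = \<tau>\<^sub>1"
    by (simp_all add: \<tau>\<^sub>0_def \<tau>\<^sub>1_def powr_def mult_ac)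
  have "tail_UX n \<tau>\<^sub>0 \<le> a ^ n"
    using tail_UX_le_mgf[OF t\<^sub>1, of n "ln 2 * (mutual_info pUX + \<delta>)"] unfolding \<tau>_eq a_def .
  moreover have "tail_UZ n \<tau>\<^sub>1 \<le> b ^ n"
    using tail_UZ_le_mgf[OF t\<^sub>2, of n "ln 2 * (mutual_info pUZ - \<delta>)"] unfolding \<tau>_eq b_def .
  moreover obtain c where c: "length c = \<Theta> * L"
    and error: "protocol_error PXZ W n \<Theta> (encoder n L c) (decoder n L c)
                  \<le> 2 * tail_UX n \<tau>\<^sub>0 + sqrt (\<tau>\<^sub>0 / (\<Theta> * L)) + 2 * (tail_UZ n \<tau>\<^sub>1 + (real L - 1) / \<tau>\<^sub>1)"
    using exists_code_error_le[OF sizes(1), of L \<tau>\<^sub>0 \<tau>\<^sub>1 n] by (auto simp: L_def \<tau>\<^sub>0_def \<tau>\<^sub>1_def)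
  moreover have "sqrt (\<tau>\<^sub>0 / (\<Theta> * L)) \<le> sqrt (2 * (2 powr (- 5 * \<delta>)) ^ n)"
    using sizes(4) by (intro real_sqrt_le_mono) simp
  ultimately have "protocol_error PXZ W n \<Theta> (encoder n L c) (decoder n L c)
      \<le> 2 * a ^ n + sqrt (2 * (2 powr (- 5 * \<delta>)) ^ n) + 2 * (b ^ n + (2 powr (- \<delta>)) ^ n)"
    using sizes(3) by (elim order.trans) (intro add_mono mult_left_mono; simp)
  moreover have "log 2 \<Theta> / n \<le> R + 8 * \<delta>"
    using sizes(2) n by (simp add: divide_le_eq mult.commute)
  ultimately show ?thesis
    using is_protocol_code[OF c sizes(1)] by (auto simp: L_def)
qed

lemma sum_joint_eq_pUX: "(\<Sum>y\<in>UNIV. \<Sum>z\<in>UNIV. PXZ x z * PU_X x u * PY_UZ u z y) = pUX u x"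
proof -
  have "(\<Sum>y\<in>UNIV. \<Sum>z\<in>UNIV. PXZ x z * PU_X x u * PY_UZ u z y)
      = (\<Sum>z\<in>UNIV. \<Sum>y\<in>UNIV. PXZ x z * PU_X x u * PY_UZ u z y)"
    by (rule sum.swap)
  also have "\<dots> = (\<Sum>z\<in>UNIV. PXZ x z * PU_X x u)"
    by (simp add: sum_distrib_left[symmetric] sum_PY_UZ)
  finally show ?thesis
    by (simp add: pUX_def pX_def sum_distrib_right)
qed

lemma sum_joint_eq_pUZ: "(\<Sum>x\<in>UNIV. \<Sum>y\<in>UNIV. PXZ x z * PU_X x u * PY_UZ u z y) = pUZ u z"
  by (simp add: pUZ_def sum_distrib_left[symmetric] sum_PY_UZ)

lemma achievable_if_rate_ge:
  assumes rate: "R \<ge> mutual_info pUX - mutual_info pUZ"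
  shows "achievable PXZ W R"
proof (rule achievableI)
  fix \<epsilon> :: real
  assume \<epsilon>: "\<epsilon> > 0"
  define \<delta> where "\<delta> = \<epsilon> / 8"
  have \<delta>: "\<delta> > 0"
    using \<epsilon> by (simp add: \<delta>_def)
  obtain t\<^sub>1 where t\<^sub>1: "t\<^sub>1 > 0" and a_less_1:
    "mgf pUX (\<lambda>u x. joint_pmf.info_density pUX u x - ln 2 * (mutual_info pUX + \<delta>)) t\<^sub>1 < 1"
    using joint_pmf.mgf_info_density_less_1(1)[OF joint_pmf_pUX] \<delta> by force
  obtain t\<^sub>2 where t\<^sub>2: "t\<^sub>2 < 0" and b_less_1:
    "mgf pUZ (\<lambda>u z. joint_pmf.info_density pUZ u z - ln 2 * (mutual_info pUZ - \<delta>)) t\<^sub>2 < 1"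
    using joint_pmf.mgf_info_density_less_1(2)[OF joint_pmf_pUZ] \<delta> by force
  define a where "a = mgf pUX (\<lambda>u x. joint_pmf.info_density pUX u x - ln 2 * (mutual_info pUX + \<delta>)) t\<^sub>1"
  define b where "b = mgf pUZ (\<lambda>u z. joint_pmf.info_density pUZ u z - ln 2 * (mutual_info pUZ - \<delta>)) t\<^sub>2"
  define bound where "bound n = 2 * a ^ n + sqrt (2 * (2 powr (- 5 * \<delta>)) ^ n) + 2 * (b ^ n + (2 powr (- \<delta>)) ^ n)"
    for n :: nat
  have powr_less_1: "2 powr (- x) < (1::real)" if "x > 0" for x
    using that powr_less_cancel_iff[of 2 "- x" 0] by simp
  have "bound \<longlonglongrightarrow> 2 * 0 + sqrt (2 * 0) + 2 * (0 + 0)"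
    unfolding bound_def using a_less_1 b_less_1 \<delta>
    by (intro tendsto_intros LIMSEQ_power_zero)
       (simp_all add: a_def b_def mgf_nonneg pUX_nonneg pUZ_nonneg powr_less_1)
  moreover have "R + 8 * \<delta> > 0"
    using rate mutual_info_pUZ_le_pUX \<epsilon> by (simp add: \<delta>_def)
  then have "eventually (\<lambda>n. \<exists>\<Theta> E D. is_protocol n \<Theta> E D \<and> log 2 \<Theta> / n \<le> R + \<epsilon> \<and>
               protocol_error PXZ W n \<Theta> E D \<le> bound n) sequentially"
    using exists_protocol_error_le[of _ R \<delta> t\<^sub>1 t\<^sub>2, folded a_def b_def] rate t\<^sub>1 t\<^sub>2
    by (elim eventually_mono[OF eventually_two_powr_ge_2]) (auto simp: bound_def \<delta>_def)
  ultimately show "\<exists>f. f \<longlonglongrightarrow> 0 \<and> (\<forall>\<^sub>F n in sequentially. \<exists>\<Theta> E D. is_protocol n \<Theta> E D \<and>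
                     log 2 \<Theta> / n \<le> R + \<epsilon> \<and> protocol_error PXZ W n \<Theta> E D \<le> f n)"
    by auto
qed

end

lemma is_pmf_case_prod:
  "is_pmf (\<lambda>(a, b). p a b) \<longleftrightarrow> (\<forall>a b. p a b \<ge> 0) \<and> (\<Sum>a\<in>UNIV. \<Sum>b\<in>UNIV. p a b) = 1"
proof -
  have "(\<Sum>ab\<in>UNIV. case ab of (a, b) \<Rightarrow> p a b) = (\<Sum>a\<in>UNIV. \<Sum>b\<in>UNIV. p a b)"
    by (simp add: sum.cartesian_product UNIV_Times_UNIV[symmetric] del: UNIV_Times_UNIV)
  then show ?thesis
    by (simp add: is_pmf_def)
qed

text \<open>Under \<open>X - (Y, Z) - U\<close> the posterior of \<open>X\<close> given \<open>(U, Y, Z)\<close> equals that given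
  \<open>(Y, Z)\<close>, which is \<open>W\<close> wherever \<open>P\<^sub>Y\<^sub>Z > 0\<close>; where \<open>P\<^sub>Y\<^sub>Z = 0\<close> both sides vanish.\<close>

lemma posterior_factorization:
  fixes P :: "'u::finite \<Rightarrow> 'x::finite \<Rightarrow> 'y::finite \<Rightarrow> 'z::finite \<Rightarrow> real"
  assumes nonneg: "\<And>u x y z. P u x y z \<ge> 0"
    and markov: "markov_chain (\<lambda>x (y, z) u. P u x y z)"
    and posterior: "\<forall>x y z. (\<Sum>u\<in>UNIV. \<Sum>x'\<in>UNIV. P u x' y z) > 0 \<longrightarrow>
                      (\<Sum>u\<in>UNIV. P u x y z) / (\<Sum>u\<in>UNIV. \<Sum>x'\<in>UNIV. P u x' y z) = W y z x"
  shows "P u x y z = (\<Sum>x'\<in>UNIV. P u x' y z) * W y z x"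
proof -
  define S where "S = (\<Sum>u\<in>UNIV. \<Sum>x'\<in>UNIV. P u x' y z)"
  have "(\<Sum>x'\<in>UNIV. \<Sum>u'\<in>UNIV. P u' x' y z) = S"
    unfolding S_def by (rule sum.swap)
  then have chain: "P u x y z * S = (\<Sum>u'\<in>UNIV. P u' x y z) * (\<Sum>x'\<in>UNIV. P u x' y z)"
    using markov[unfolded markov_chain_def, rule_format, of x "(y, z)" u] by simp
  show ?thesis
  proof (cases "S > 0")
    case True
    then have "(\<Sum>u'\<in>UNIV. P u' x y z) = W y z x * S"
      using posterior by (simp add: S_def field_simps)
    then show ?thesis
      using chain True by (simp add: field_simps)
  next
    case False
    moreover have "S \<ge> 0"
      by (simp add: S_def sum_nonneg nonneg)
    ultimately have "S = 0"
      by simp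
    then have "(\<Sum>x'\<in>UNIV. P u x' y z) = 0"
      using nonneg by (simp add: S_def sum_nonneg_eq_0_iff sum_nonneg)
    moreover have "P u x y z \<le> (\<Sum>x'\<in>UNIV. P u x' y z)"
      using nonneg by (intro member_le_sum) auto
    ultimately show ?thesis
      using nonneg[of u x y z] by simp
  qed
qed

theorem theorem2:
  fixes PXZ :: "'x::finite \<Rightarrow> 'z::finite \<Rightarrow> real"
    and W :: "'y::finite \<Rightarrow> 'z \<Rightarrow> 'x \<Rightarrow> real"
    and PU_X :: "'x \<Rightarrow> 'u::finite \<Rightarrow> real"
    and PY_UZ :: "'u \<Rightarrow> 'z \<Rightarrow> 'y \<Rightarrow> real"
    and R :: real
  defines "P \<equiv> (\<lambda>u x y z. PXZ x z * PU_X x u * PY_UZ u z y)"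
  assumes PXZ_pmf: "is_pmf (\<lambda>(x, z). PXZ x z)"
    and W_cond: "\<forall>y z. is_pmf (W y z)"
    and PU_X_cond: "\<forall>x. is_pmf (PU_X x)"
    and PY_UZ_cond: "\<forall>u z. is_pmf (PY_UZ u z)"
    and posterior: "\<forall>x y z. (\<Sum>u\<in>UNIV. \<Sum>x'\<in>UNIV. P u x' y z) > 0 \<longrightarrow>
                  (\<Sum>u\<in>UNIV. P u x y z) / (\<Sum>u\<in>UNIV. \<Sum>x'\<in>UNIV. P u x' y z) = W y z x"
    and markov_ZXU: "markov_chain (\<lambda>z x u. \<Sum>y\<in>UNIV. P u x y z)"
    and markov_XUZ_Y: "markov_chain (\<lambda>x (u, z) y. P u x y z)"
    and markov_XYZ_U: "markov_chain (\<lambda>x (y, z) u. P u x y z)"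
    and rate: "R \<ge> mutual_info (\<lambda>x u. \<Sum>y\<in>UNIV. \<Sum>z\<in>UNIV. P u x y z)
                  - mutual_info (\<lambda>u z. \<Sum>x\<in>UNIV. \<Sum>y\<in>UNIV. P u x y z)"
  shows "achievable PXZ W R"
proof -
  have PXZ: "\<forall>x z. PXZ x z \<ge> 0" "(\<Sum>x\<in>UNIV. \<Sum>z\<in>UNIV. PXZ x z) = 1"
    using PXZ_pmf by (simp_all add: is_pmf_case_prod)
  have P_nonneg: "P u x y z \<ge> 0" for u x y z
    using PXZ PU_X_cond PY_UZ_cond by (simp add: P_def is_pmf_def)
  have factorization: "PXZ x z * PU_X x u * PY_UZ u z y =
      (\<Sum>x'\<in>UNIV. PXZ x' z * PU_X x' u * PY_UZ u z y) * W y z x" for u x y z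
    using posterior_factorization[OF P_nonneg markov_XYZ_U posterior, of u x y z] by (simp add: P_def)
  interpret wyner_ziv PXZ PU_X W PY_UZ
    using PXZ W_cond PU_X_cond PY_UZ_cond
    by (intro wyner_ziv.intro source_channel.intro wyner_ziv_axioms.intro factorization)
       (simp_all add: is_pmf_def)
  show ?thesis
    using rate achievable_if_rate_ge
    by (simp add: P_def sum_joint_eq_pUX sum_joint_eq_pUZ mutual_info_swap[of pUX])
qed

end
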